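(* For $h_0$ fixed, there exist positive numbers $T_X$, $\varepsilon_0$ and $C$ such that for every $t\in[0,T_X]$, $\varepsilon\in(0,\varepsilon_0]$ and $i\in\{1,\dots,N\}$, the points $X_i^\varepsilon(t)$ and $\tilde X^\varepsilon_i(t)$ are defined and $$X_i^\varepsilon(t),\ \tilde X_i^\varepsilon(t)\in\mathcal A^{X^\varepsilon_{i,0,r}}_\varepsilon(d_0,h_0)\quad\text{and}\quad|X_i^\varepsilon(t)-\tilde X_i^\varepsilon(t)|\le\frac{C}{|\ln\varepsilon|}.$$
   Context: $\mathbb{R}^2_+=\{x=(x_z,x_r):x_r>0\}$, $e_z=(1,0)$, $(a_z,a_r)^\perp=(-a_r,a_z)$. Data: $N\ge2$, $X^*=(z^*,r^* )\in\mathbb{R}^2_+$, $Y_{1,0},\dots,Y_{N,0}\in\mathbb{R}^2$ with pairwise distinct radial components $Y_{i,0,r}$, $\gamma>0$, $h_0>0$; $d_0=\frac14\min_{j\ne k}|Y_{j,0,r}-Y_{k,0,r}|$; for $\varepsilon\in(0,1)$, $X^\varepsilon_{i,0}=X^*+Y_{i,0}/\sqrt{|\ln\varepsilon|}$ and $\mathcal A^{r_0}_\varepsilon(d,h)=\{(z,r):|r-r_0|\le d/\sqrt{|\ln\varepsilon|},\ |z-z^*|\le h\}$. $(X^\varepsilon_i)_i$ solves $\frac{d}{dt}X_i^\varepsilon=\frac{\gamma}{4\pi X^\varepsilon_{i,r}}e_z+\frac{\gamma}{2\pi|\ln\varepsilon|}\sum_{j\neq i}\frac{(X_i^\varepsilon-X_j^\varepsilon)^\perp}{|X_i^\varepsilon-X_j^\varepsilon|^2}$,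 $X_i^\varepsilon(0)=X^\varepsilon_{i,0}$. $(\tilde Y_i)_i$ solves $\frac{d}{dt}\tilde Y_i=\frac{\gamma}{2\pi}\sum_{j\ne i}\frac{(\tilde Y_i-\tilde Y_j)^\perp}{|\tilde Y_i-\tilde Y_j|^2}-\frac{\gamma}{4\pi(r^* )^2}\tilde Y_{i,r}e_z$, $\tilde Y_i(0)=Y_{i,0}$, and $\tilde X_i^\varepsilon(t)=X^*+\frac{\gamma}{4\pi r^*}te_z+\frac{1}{\sqrt{|\ln\varepsilon|}}\tilde Y_i(t)$. *)

theory Defs
  imports "HOL-Analysis.Analysis"
begin

text \<open>Points of the half-plane are pairs (z, r) :: real \<times> real; fst = axial z, snd = radial r.\<close>

definition perp :: "real \<times> real \<Rightarrow> real \<times> real" where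
  "perp a = (- snd a, fst a)"

definition ez :: "real \<times> real" where "ez = (1, 0)"

definition lnabs :: "real \<Rightarrow> real" where "lnabs \<epsilon> = \<bar>ln \<epsilon>\<bar>"

definition velX :: "nat \<Rightarrow> real \<Rightarrow> real \<Rightarrow> (nat \<Rightarrow> real \<times> real) \<Rightarrow> nat \<Rightarrow> real \<times> real" where
  "velX N \<gamma> \<epsilon> P i =
     (\<gamma> / (4 * pi * snd (P i))) *\<^sub>R ez
     + (\<gamma> / (2 * pi * lnabs \<epsilon>)) *\<^sub>R
        (\<Sum>j\<in>{1..N} - {i}. (1 / (norm (P i - P j))\<^sup>2) *\<^sub>R perp (P i - P j))"

definition velY :: "nat \<Rightarrow> real \<Rightarrow> real \<Rightarrow> (nat \<Rightarrow> real \<times> real) \<Rightarrow> nat \<Rightarrow> real \<times> real" where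
  "velY N \<gamma> rs P i =
     (\<gamma> / (2 * pi)) *\<^sub>R (\<Sum>j\<in>{1..N} - {i}. (1 / (norm (P i - P j))\<^sup>2) *\<^sub>R perp (P i - P j))
     - (\<gamma> / (4 * pi * rs\<^sup>2) * snd (P i)) *\<^sub>R ez"

definition is_X_sol :: "nat \<Rightarrow> real \<Rightarrow> real \<Rightarrow> (nat \<Rightarrow> real \<times> real) \<Rightarrow> real
    \<Rightarrow> (nat \<Rightarrow> real \<Rightarrow> real \<times> real) \<Rightarrow> bool" where
  "is_X_sol N \<gamma> \<epsilon> X0 T X \<longleftrightarrow>
     (\<forall>i\<in>{1..N}. X i 0 = X0 i) \<and>
     (\<forall>t\<in>{0..T}. \<forall>i\<in>{1..N}. snd (X i t) > 0) \<and>
     (\<forall>t\<in>{0..T}. \<forall>i\<in>{1..N}. \<forall>j\<in>{1..N}. i \<noteq> j \<longrightarrow> X i t \<noteq> X j t) \<and>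
     (\<forall>t\<in>{0..T}. \<forall>i\<in>{1..N}.
        (X i has_vector_derivative velX N \<gamma> \<epsilon> (\<lambda>k. X k t) i) (at t within {0..T}))"

definition is_Y_sol :: "nat \<Rightarrow> real \<Rightarrow> real \<Rightarrow> (nat \<Rightarrow> real \<times> real) \<Rightarrow> real
    \<Rightarrow> (nat \<Rightarrow> real \<Rightarrow> real \<times> real) \<Rightarrow> bool" where
  "is_Y_sol N \<gamma> rs Y0 T Y \<longleftrightarrow>
     (\<forall>i\<in>{1..N}. Y i 0 = Y0 i) \<and>
     (\<forall>t\<in>{0..T}. \<forall>i\<in>{1..N}. \<forall>j\<in>{1..N}. i \<noteq> j \<longrightarrow> Y i t \<noteq> Y j t) \<and>
     (\<forall>t\<in>{0..T}. \<forall>i\<in>{1..N}.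
        (Y i has_vector_derivative velY N \<gamma> rs (\<lambda>k. Y k t) i) (at t within {0..T}))"

definition X0eps :: "real \<times> real \<Rightarrow> (nat \<Rightarrow> real \<times> real) \<Rightarrow> real \<Rightarrow> nat \<Rightarrow> real \<times> real" where
  "X0eps Xs Y0 \<epsilon> i = Xs + (1 / sqrt (lnabs \<epsilon>)) *\<^sub>R Y0 i"

definition Xtilde :: "real \<Rightarrow> real \<times> real \<Rightarrow> real \<Rightarrow> (nat \<Rightarrow> real \<Rightarrow> real \<times> real) \<Rightarrow> nat \<Rightarrow> real \<Rightarrow> real \<times> real" where
  "Xtilde \<gamma> Xs \<epsilon> Y i t = Xs + (\<gamma> / (4 * pi * snd Xs) * t) *\<^sub>R ez + (1 / sqrt (lnabs \<epsilon>)) *\<^sub>R Y i t"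

definition regionA :: "real \<Rightarrow> real \<Rightarrow> real \<Rightarrow> real \<Rightarrow> real \<Rightarrow> (real \<times> real) set" where
  "regionA zs \<epsilon> r0 d h = {p. \<bar>snd p - r0\<bar> \<le> d / sqrt (lnabs \<epsilon>) \<and> \<bar>fst p - zs\<bar> \<le> h}"

definition d0 :: "nat \<Rightarrow> (nat \<Rightarrow> real \<times> real) \<Rightarrow> real" where
  "d0 N Y0 = (1/4) * Min {\<bar>snd (Y0 j) - snd (Y0 k)\<bar> | j k. j \<in> {1..N} \<and> k \<in> {1..N} \<and> j \<noteq> k}"

end

theory Submission
  imports Defs
begin

(*
  Both systems are solved by Picard iteration on a short interval [0, T], in the radial slab of
  configurations whose radii stay within \<rho> of the initial ones. The initial radii are
  4\<rho>-separated, so the vortices stay 2\<rho> apart there and the interaction is bounded and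
  Lipschitz. For X\<^sup>\<epsilon> the width is \<rho> = d0 / sqrt |ln \<epsilon>|, and the factor 1 / |ln \<epsilon>| in front of
  the interaction compensates the 1 / \<rho>\<^sup>2 of its Lipschitz constant, so T does not depend on \<epsilon>.
  A continuity argument shows that every solution, not only the constructed one, stays in the
  half slab, because in time T the radial velocity moves a radius by at most \<rho> / 2.

  The difference D = X\<^sup>\<epsilon> - Xtilde\<^sup>\<epsilon> vanishes at t = 0 and |D'| \<le> L \<Sum>|D| + c / |ln \<epsilon>|, with L the
  common Lipschitz constant of the two velocity fields. The error c / |ln \<epsilon>| is the quadratic
  remainder in the expansion of the self-induced speed \<gamma> / (4 \<pi> r) around r*, whose linear
  part is the drift of the limit system. Since N T L \<le> 1/2, this gives |D| \<le> 2 N T c / |ln \<epsilon>|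
  on [0, T].
*)

section \<open>Differential inequalities\<close>

lemma norm_diff_le_of_vector_derivative_bound:
  fixes f :: "real \<Rightarrow> 'a::real_normed_vector"
  assumes "a \<le> b" and "continuous_on {a..b} f"
    and "\<And>s. a < s \<Longrightarrow> s < b \<Longrightarrow> (f has_vector_derivative f' s) (at s)"
    and "\<And>s. a < s \<Longrightarrow> s < b \<Longrightarrow> norm (f' s) \<le> B"
  shows "norm (f b - f a) \<le> B * (b - a)"
proof (cases "a = b")
  case False
  with assms have "norm (f b - f a) \<le> B * b - B * a"
    by (intro differentiable_bound_general[where \<phi> = "\<lambda>s. B * s" and \<phi>' = "\<lambda>_. B"])
      (auto intro!: derivative_eq_intros continuous_on_mult_left continuous_on_id)
  then show ?thesis by (simp add: right_diff_distrib)
qed simp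

lemma norm_diff_le_of_vector_derivative_bound_within:
  fixes f :: "real \<Rightarrow> 'a::real_normed_vector"
  assumes "\<And>s. s \<in> {a..b} \<Longrightarrow> (f has_vector_derivative f' s) (at s within {a..b})"
    and "\<And>s. s \<in> {a..b} \<Longrightarrow> norm (f' s) \<le> B" and "t \<in> {a..b}"
  shows "norm (f t - f a) \<le> B * (t - a)"
proof (rule norm_diff_le_of_vector_derivative_bound)
  show "continuous_on {a..t} f"
    using continuous_on_vector_derivative[of "{a..b}" f f'] assms(1,3)
    by (auto intro: continuous_on_subset)
  fix s assume "a < s" "s < t"
  with assms(1)[of s] assms(3) show "(f has_vector_derivative f' s) (at s)"
    by (auto simp: at_within_Icc_at)
  show "norm (f' s) \<le> B" using \<open>a < s\<close> \<open>s < t\<close> assms(2,3) by auto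
qed (use assms(3) in auto)

text \<open>A Gronwall-type bound on a short interval, read off at the time where \<open>\<Sum>k\<in>I. norm (D k s)\<close> is maximal.\<close>

lemma norm_le_of_derivative_linear_in_sum:
  fixes D V :: "'i \<Rightarrow> real \<Rightarrow> 'a::real_normed_vector" and a b T :: real
  assumes "finite I" and "0 \<le> a" and "0 \<le> b" and small: "T * a * card I \<le> 1/2"
    and D0: "\<And>j. j \<in> I \<Longrightarrow> D j 0 = 0"
    and dD: "\<And>j s. j \<in> I \<Longrightarrow> s \<in> {0..T} \<Longrightarrow> (D j has_vector_derivative V j s) (at s within {0..T})"
    and V: "\<And>j s. j \<in> I \<Longrightarrow> s \<in> {0..T} \<Longrightarrow> norm (V j s) \<le> a * (\<Sum>k\<in>I. norm (D k s)) + b"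
    and "i \<in> I" and t: "t \<in> {0..T}"
  shows "norm (D i t) \<le> 2 * card I * T * b"
proof -
  define \<phi> where "\<phi> s = (\<Sum>k\<in>I. norm (D k s))" for s
  have "continuous_on {0..T} \<phi>"
    unfolding \<phi>_def using continuous_on_vector_derivative[OF dD]
    by (intro continuous_on_sum continuous_on_norm) blast
  then obtain s\<^sub>0 where s\<^sub>0: "s\<^sub>0 \<in> {0..T}" and max: "\<And>s. s \<in> {0..T} \<Longrightarrow> \<phi> s \<le> \<phi> s\<^sub>0"
    using continuous_attains_sup[of "{0..T}" \<phi>] t by fastforce
  define E where "E = \<phi> s\<^sub>0"
  have "E \<ge> 0" unfolding E_def \<phi>_def by (simp add: sum_nonneg)
  have D_le: "norm (D j s) \<le> (a * E + b) * T" if "j \<in> I" "s \<in> {0..T}" for j s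
  proof -
    have "norm (D j s - D j 0) \<le> (a * E + b) * (s - 0)"
    proof (rule norm_diff_le_of_vector_derivative_bound_within[OF dD[OF \<open>j \<in> I\<close>] _ \<open>s \<in> {0..T}\<close>])
      fix s' assume "s' \<in> {0..T}"
      then have "a * \<phi> s' \<le> a * E"
        unfolding E_def using max \<open>0 \<le> a\<close> by (intro mult_left_mono) auto
      then show "norm (V j s') \<le> a * E + b"
        using V[OF \<open>j \<in> I\<close> \<open>s' \<in> {0..T}\<close>] unfolding \<phi>_def by linarith
    qed
    also have "\<dots> \<le> (a * E + b) * T"
      using that \<open>0 \<le> a\<close> \<open>0 \<le> b\<close> \<open>E \<ge> 0\<close> by (intro mult_left_mono) auto
    finally show ?thesis using D0 that by simp
  qed
  have "E \<le> card I * ((a * E + b) * T)"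
    using D_le[OF _ s\<^sub>0] unfolding E_def \<phi>_def[of s\<^sub>0] by (rule sum_bounded_above)
  also have "\<dots> = (T * a * card I) * E + card I * T * b" by (simp add: algebra_simps)
  also have "\<dots> \<le> E / 2 + card I * T * b"
    using mult_right_mono[OF small \<open>E \<ge> 0\<close>] by simp
  finally have "E \<le> 2 * card I * T * b" by simp
  moreover have "norm (D i t) \<le> \<phi> t"
    unfolding \<phi>_def using \<open>finite I\<close> \<open>i \<in> I\<close> by (intro member_le_sum) auto
  ultimately show ?thesis using max[OF t] unfolding E_def by simp
qed

text \<open>Continuity argument: up to the first time some \<open>norm (g j)\<close> reaches \<open>\<rho>\<close>, all of them grow by at most \<open>\<rho> / 2\<close>.\<close>

lemma bootstrap_norm_bound:
  fixes g g' :: "'i \<Rightarrow> real \<Rightarrow> 'a::real_normed_vector" and \<rho> T :: real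
  assumes "finite I" and "0 < \<rho>" and "0 < T"
    and g0: "\<And>j. j \<in> I \<Longrightarrow> g j 0 = 0"
    and dg: "\<And>j s. j \<in> I \<Longrightarrow> s \<in> {0..T} \<Longrightarrow> (g j has_vector_derivative g' j s) (at s within {0..T})"
    and slow: "\<And>j s. j \<in> I \<Longrightarrow> s \<in> {0..T} \<Longrightarrow> (\<And>k. k \<in> I \<Longrightarrow> norm (g k s) \<le> \<rho>) \<Longrightarrow>
      T * norm (g' j s) \<le> \<rho> / 2"
    and "i \<in> I" and "t \<in> {0..T}"
  shows "norm (g i t) \<le> \<rho> / 2"
proof -
  have cont: "continuous_on {0..T} (g j)" if "j \<in> I" for j
    using dg[OF that] by (rule continuous_on_vector_derivative)
  have grow: "norm (g j t) \<le> \<rho> / 2"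
    if j: "j \<in> I" and t: "t \<in> {0..T}" and below: "\<And>s k. 0 < s \<Longrightarrow> s < t \<Longrightarrow> k \<in> I \<Longrightarrow> norm (g k s) \<le> \<rho>"
    for j t
  proof -
    have "norm (g j t - g j 0) \<le> \<rho> / (2 * T) * (t - 0)"
    proof (rule norm_diff_le_of_vector_derivative_bound)
      show "continuous_on {0..t} (g j)" using cont[OF j] t by (auto intro: continuous_on_subset)
      fix s assume s: "0 < s" "s < t"
      show "(g j has_vector_derivative g' j s) (at s)"
        using dg[OF j, of s] s t by (simp add: at_within_Icc_at)
      have "T * norm (g' j s) \<le> \<rho> / 2" using slow[OF j, of s] below[OF s] s t by auto
      then show "norm (g' j s) \<le> \<rho> / (2 * T)" using \<open>0 < T\<close> by (simp add: field_simps)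
    qed (use t in auto)
    also have "\<dots> \<le> \<rho> / (2 * T) * T"
      using t \<open>0 < \<rho>\<close> \<open>0 < T\<close> by (intro mult_left_mono) auto
    finally show ?thesis using g0[OF j] \<open>0 < T\<close> by simp
  qed
  define Z where "Z = (\<Union>j\<in>I. {s \<in> {0..T}. \<rho> \<le> norm (g j s)})"
  have "Z = {}"
  proof (rule ccontr)
    assume "Z \<noteq> {}"
    have "closed Z"
      unfolding Z_def using \<open>finite I\<close> cont
      by (intro closed_UN ballI continuous_on_closed_Collect_le continuous_on_const continuous_on_norm) auto
    moreover have "bdd_below Z" unfolding Z_def by (auto intro: bdd_belowI[of _ 0])
    ultimately have "Inf Z \<in> Z" using \<open>Z \<noteq> {}\<close> closed_contains_Inf by blast
    then obtain j where j: "j \<in> I" "Inf Z \<in> {0..T}" "\<rho> \<le> norm (g j (Inf Z))"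
      unfolding Z_def by blast
    have "norm (g k s) \<le> \<rho>" if "0 < s" "s < Inf Z" "k \<in> I" for s k
    proof (rule ccontr)
      assume "\<not> norm (g k s) \<le> \<rho>"
      then have "s \<in> Z" unfolding Z_def using that j(2) by force
      then show False using cInf_lower[OF _ \<open>bdd_below Z\<close>, of s] that(2) by simp
    qed
    then have "norm (g j (Inf Z)) \<le> \<rho> / 2" by (rule grow[OF j(1,2)])
    with j(3) \<open>0 < \<rho>\<close> show False by simp
  qed
  then have "norm (g k s) \<le> \<rho>" if "k \<in> I" "s \<in> {0..T}" for k s
    using that unfolding Z_def by fastforce
  then show ?thesis using \<open>t \<in> {0..T}\<close> by (intro grow[OF \<open>i \<in> I\<close> \<open>t \<in> {0..T}\<close>]) auto
qed

lemma geometric_steps_limit: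
  fixes f :: "nat \<Rightarrow> 'a::banach"
  assumes steps: "\<And>n. norm (f (Suc n) - f n) \<le> e * q ^ n" and q: "0 \<le> q" "q < 1"
  shows "f \<longlonglongrightarrow> lim f" and "norm (lim f - f n) \<le> e * q ^ n / (1 - q)"
proof -
  define d where "d k = f (Suc k) - f k" for k
  have geom: "summable (\<lambda>k. e * q ^ k)" using q by simp
  then have "summable (\<lambda>k. norm (d k))"
    using steps unfolding d_def by (intro summable_comparison_test'[OF geom]) simp
  note sum_d = this summable_norm_cancel[OF this]
  have f_eq: "f = (\<lambda>n. f 0 + (\<Sum>k<n. d k))"
    unfolding d_def sum_lessThan_telescope by simp
  have "(\<lambda>n. f 0 + (\<Sum>k<n. d k)) \<longlonglongrightarrow> f 0 + suminf d"
    by (intro tendsto_add tendsto_const summable_LIMSEQ sum_d)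
  then have "f \<longlonglongrightarrow> f 0 + suminf d" by (subst f_eq)
  then show lim: "f \<longlonglongrightarrow> lim f" by (simp add: limI)
  have "lim f - f n = (\<Sum>k. d (k + n))"
    using LIMSEQ_unique[OF lim \<open>f \<longlonglongrightarrow> f 0 + suminf d\<close>] fun_cong[OF f_eq, of n]
      suminf_split_initial_segment[OF sum_d(2), of n] by simp
  also have "norm \<dots> \<le> (\<Sum>k. norm (d (k + n)))"
    using summable_ignore_initial_segment[OF sum_d(1)] by (rule summable_norm)
  also have "\<dots> \<le> (\<Sum>k. e * q ^ n * q ^ k)"
  proof (rule suminf_le)
    show "norm (d (k + n)) \<le> e * q ^ n * q ^ k" for k
      using steps[of "k + n"] unfolding d_def by (simp add: power_add mult_ac)
    show "summable (\<lambda>k. norm (d (k + n)))" using summable_ignore_initial_segment[OF sum_d(1)] .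
    show "summable (\<lambda>k. e * q ^ n * q ^ k)" using q by simp
  qed
  also have "\<dots> = e * q ^ n / (1 - q)"
    using q by (simp add: suminf_mult suminf_geometric)
  finally show "norm (lim f - f n) \<le> e * q ^ n / (1 - q)" .
qed

lemma abs_inverse_diff_le:
  fixes a b r :: real
  assumes "0 < r" and "r / 2 \<le> a" and "r / 2 \<le> b"
  shows "\<bar>1 / a - 1 / b\<bar> \<le> 4 / r\<^sup>2 * \<bar>a - b\<bar>"
proof -
  have "\<bar>1 / a - 1 / b\<bar> = \<bar>a - b\<bar> / (a * b)" using assms by (simp add: field_simps abs_div)
  also have "\<dots> \<le> \<bar>a - b\<bar> / (r / 2 * (r / 2))"
    using assms by (intro divide_left_mono mult_mono mult_pos_pos) auto
  also have "\<dots> = 4 / r\<^sup>2 * \<bar>a - b\<bar>" by (simp add: power2_eq_square field_simps)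
  finally show ?thesis .
qed

lemma abs_inverse_expansion_le:
  fixes a r w m :: real
  assumes "0 < r" and "r / 2 \<le> a" and "\<bar>a - r\<bar> \<le> m"
  shows "\<bar>1 / a - 1 / r + w / r\<^sup>2\<bar> \<le> 2 * m\<^sup>2 / r ^ 3 + \<bar>a - r - w\<bar> / r\<^sup>2"
proof -
  have "0 < a" using assms by linarith
  have "1 / a - 1 / r + w / r\<^sup>2 = (a - r)\<^sup>2 / (r\<^sup>2 * a) - (a - r - w) / r\<^sup>2"
    using \<open>0 < a\<close> \<open>0 < r\<close> by (simp add: field_simps power2_eq_square)
  also have "\<bar>\<dots>\<bar> \<le> \<bar>(a - r)\<^sup>2 / (r\<^sup>2 * a)\<bar> + \<bar>(a - r - w) / r\<^sup>2\<bar>"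
    by (rule abs_triangle_ineq4)
  also have "\<dots> = (a - r)\<^sup>2 / (r\<^sup>2 * a) + \<bar>a - r - w\<bar> / r\<^sup>2"
    using \<open>0 < a\<close> by simp
  also have "(a - r)\<^sup>2 / (r\<^sup>2 * a) \<le> m\<^sup>2 / (r\<^sup>2 * (r / 2))"
    using assms \<open>0 < a\<close> power_mono[OF assms(3) abs_ge_zero, of 2]
    by (intro frac_le mult_left_mono) auto
  finally show ?thesis by (simp add: power3_eq_cube power2_eq_square mult_ac)
qed

lemma norm_diff_sphere_inversion:
  fixes a b :: "'a::real_inner"
  assumes "a \<noteq> 0" and "b \<noteq> 0"
  shows "norm (a /\<^sub>R (norm a)\<^sup>2 - b /\<^sub>R (norm b)\<^sup>2) = norm (a - b) / (norm a * norm b)"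
proof -
  have "(norm (a /\<^sub>R (norm a)\<^sup>2 - b /\<^sub>R (norm b)\<^sup>2))\<^sup>2 = (norm (a - b) / (norm a * norm b))\<^sup>2"
    using assms
    by (simp add: power2_norm_eq_inner inner_diff_left inner_diff_right inner_commute power_divide
        power_mult_distrib field_simps)
  then show ?thesis by (simp add: power2_eq_iff_nonneg)
qed

lemma abs_snd_le_norm: "\<bar>snd v\<bar> \<le> norm (v :: real \<times> real)"
  using norm_snd_le[of "snd v" "fst v"] by (cases v) simp

lemma abs_fst_le_norm: "\<bar>fst v\<bar> \<le> norm (v :: real \<times> real)"
  using norm_fst_le[of "fst v" "snd v"] by (cases v) simp

section \<open>Picard iteration in a radial slab\<close>

definition radial_slab :: "nat \<Rightarrow> (nat \<Rightarrow> real \<times> real) \<Rightarrow> real \<Rightarrow> (nat \<Rightarrow> real \<times> real) set" where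
  "radial_slab N P0 \<rho> = {P. \<forall>i\<in>{1..N}. \<bar>snd (P i) - snd (P0 i)\<bar> \<le> \<rho>}"

lemma radial_slab_mono: "\<rho> \<le> \<rho>' \<Longrightarrow> radial_slab N P0 \<rho> \<subseteq> radial_slab N P0 \<rho>'"
  unfolding radial_slab_def by fastforce

lemma radial_slab_separated:
  assumes "P \<in> radial_slab N P0 \<rho>"
    and "\<forall>j\<in>{1..N}. \<forall>k\<in>{1..N}. j \<noteq> k \<longrightarrow> 4 * \<rho> \<le> \<bar>snd (P0 j) - snd (P0 k)\<bar>"
    and "j \<in> {1..N}" "k \<in> {1..N}" "j \<noteq> k"
  shows "2 * \<rho> \<le> norm (P j - P k)"
proof -
  have "\<bar>snd (P j) - snd (P0 j)\<bar> \<le> \<rho>" "\<bar>snd (P k) - snd (P0 k)\<bar> \<le> \<rho>"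
    using assms(1,3,4) unfolding radial_slab_def by auto
  moreover have "4 * \<rho> \<le> \<bar>snd (P0 j) - snd (P0 k)\<bar>" using assms(2-5) by blast
  moreover have "\<bar>snd (P j) - snd (P k)\<bar> \<le> norm (P j - P k)"
    using abs_snd_le_norm[of "P j - P k"] by simp
  ultimately show ?thesis by linarith
qed

text \<open>The radial speed bound with \<open>\<rho> / 2\<close> serves twice: it keeps the Picard iterates in the slab and
  confines every solution to the half slab.\<close>

locale slab_field =
  fixes N :: nat and F :: "(nat \<Rightarrow> real \<times> real) \<Rightarrow> nat \<Rightarrow> real \<times> real"
    and P0 :: "nat \<Rightarrow> real \<times> real" and \<rho> T Lip :: real
  assumes T_pos: "0 < T" and \<rho>_pos: "0 < \<rho>" and Lip_nonneg: "0 \<le> Lip"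
    and radial_speed: "\<And>P i. P \<in> radial_slab N P0 \<rho> \<Longrightarrow> i \<in> {1..N} \<Longrightarrow> T * \<bar>snd (F P i)\<bar> \<le> \<rho> / 2"
    and lipschitz: "\<And>P Q i. P \<in> radial_slab N P0 \<rho> \<Longrightarrow> Q \<in> radial_slab N P0 \<rho> \<Longrightarrow> i \<in> {1..N} \<Longrightarrow>
      norm (F P i - F Q i) \<le> Lip * (\<Sum>j\<in>{1..N}. norm (P j - Q j))"
    and short_time: "T * Lip * N \<le> 1/2"
begin

definition admissible :: "(nat \<Rightarrow> real \<Rightarrow> real \<times> real) \<Rightarrow> bool" where
  "admissible p \<longleftrightarrow> (\<forall>i\<in>{1..N}. continuous_on {0..T} (p i)) \<and>
     (\<forall>t\<in>{0..T}. (\<lambda>k. p k t) \<in> radial_slab N P0 \<rho>)"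

definition picard :: "(nat \<Rightarrow> real \<Rightarrow> real \<times> real) \<Rightarrow> nat \<Rightarrow> real \<Rightarrow> real \<times> real" where
  "picard p i t = P0 i + integral {0..t} (\<lambda>s. F (\<lambda>k. p k s) i)"

lemma continuous_on_field:
  assumes p: "admissible p" and i: "i \<in> {1..N}"
  shows "continuous_on {0..T} (\<lambda>s. F (\<lambda>k. p k s) i)"
  unfolding continuous_on_def
proof
  fix x assume x: "x \<in> {0..T}"
  have "(p j \<longlongrightarrow> p j x) (at x within {0..T})" if "j \<in> {1..N}" for j
    using p x that unfolding admissible_def continuous_on_def by blast
  then have "((\<lambda>s. Lip * (\<Sum>j\<in>{1..N}. norm (p j s - p j x))) \<longlongrightarrow> Lip * (\<Sum>j\<in>{1..N}. norm (p j x - p j x)))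
      (at x within {0..T})"
    by (intro tendsto_intros)
  then have "((\<lambda>s. Lip * (\<Sum>j\<in>{1..N}. norm (p j s - p j x))) \<longlongrightarrow> 0) (at x within {0..T})"
    by simp
  moreover have "\<forall>\<^sub>F s in at x within {0..T}.
      norm (F (\<lambda>k. p k s) i - F (\<lambda>k. p k x) i) \<le> Lip * (\<Sum>j\<in>{1..N}. norm (p j s - p j x))"
    using p x i lipschitz unfolding admissible_def eventually_at_filter by auto
  ultimately show "((\<lambda>s. F (\<lambda>k. p k s) i) \<longlongrightarrow> F (\<lambda>k. p k x) i) (at x within {0..T})"
    by (subst LIM_zero_iff[symmetric]) (rule Lim_null_comparison)
qed

lemma picard_has_vector_derivative:
  assumes "admissible p" "i \<in> {1..N}" "t \<in> {0..T}"
  shows "(picard p i has_vector_derivative F (\<lambda>k. p k t) i) (at t within {0..T})"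
  unfolding picard_def
  using integral_has_vector_derivative[OF continuous_on_field[OF assms(1,2)] assms(3)]
  by (intro derivative_eq_intros) auto

lemma picard_at_0 [simp]: "picard p i 0 = P0 i"
  by (simp add: picard_def)

lemma admissible_picard:
  assumes p: "admissible p"
  shows "admissible (picard p)"
  unfolding admissible_def
proof (intro conjI ballI)
  fix i assume i: "i \<in> {1..N}"
  show "continuous_on {0..T} (picard p i)"
    using picard_has_vector_derivative[OF p i] by (rule continuous_on_vector_derivative)
next
  fix t assume t: "t \<in> {0..T}"
  show "(\<lambda>k. picard p k t) \<in> radial_slab N P0 \<rho>"
    unfolding radial_slab_def
  proof (intro CollectI ballI)
    fix i assume i: "i \<in> {1..N}"
    have "norm (snd (picard p i t) - snd (picard p i 0)) \<le> \<rho> / T * (t - 0)"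
    proof (rule norm_diff_le_of_vector_derivative_bound_within[OF _ _ t])
      fix s assume s: "s \<in> {0..T}"
      show "((\<lambda>t. snd (picard p i t)) has_vector_derivative snd (F (\<lambda>k. p k s) i)) (at s within {0..T})"
        by (rule bounded_linear.has_vector_derivative[OF bounded_linear_snd
              picard_has_vector_derivative[OF p i s]])
      have "T * \<bar>snd (F (\<lambda>k. p k s) i)\<bar> \<le> \<rho>"
        using radial_speed[of "\<lambda>k. p k s" i] p s i \<rho>_pos unfolding admissible_def by fastforce
      then show "norm (snd (F (\<lambda>k. p k s) i)) \<le> \<rho> / T" using T_pos by (simp add: field_simps)
    qed
    also have "\<dots> \<le> \<rho>" using t T_pos \<rho>_pos by (simp add: field_simps)
    finally show "\<bar>snd (picard p i t) - snd (P0 i)\<bar> \<le> \<rho>" by simp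
  qed
qed

lemma picard_contraction:
  assumes p: "admissible p" and q: "admissible q"
    and close: "\<And>j s. j \<in> {1..N} \<Longrightarrow> s \<in> {0..T} \<Longrightarrow> norm (p j s - q j s) \<le> e"
    and i: "i \<in> {1..N}" and t: "t \<in> {0..T}"
  shows "norm (picard p i t - picard q i t) \<le> e / 2"
proof -
  have "norm ((picard p i t - picard q i t) - (picard p i 0 - picard q i 0)) \<le> (Lip * N * e) * (t - 0)"
  proof (rule norm_diff_le_of_vector_derivative_bound_within[OF _ _ t])
    fix s assume s: "s \<in> {0..T}"
    show "((\<lambda>t. picard p i t - picard q i t) has_vector_derivative F (\<lambda>k. p k s) i - F (\<lambda>k. q k s) i)
        (at s within {0..T})"
      using picard_has_vector_derivative[OF p i s] picard_has_vector_derivative[OF q i s]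
      by (rule has_vector_derivative_diff)
    have "norm (F (\<lambda>k. p k s) i - F (\<lambda>k. q k s) i) \<le> Lip * (\<Sum>j\<in>{1..N}. norm (p j s - q j s))"
      using lipschitz p q s i unfolding admissible_def by auto
    also have "\<dots> \<le> Lip * (\<Sum>j\<in>{1..N}. e)"
      using close s Lip_nonneg by (intro mult_left_mono sum_mono) auto
    finally show "norm (F (\<lambda>k. p k s) i - F (\<lambda>k. q k s) i) \<le> Lip * N * e" by simp
  qed
  moreover have "0 \<le> e" using close[OF i t] norm_ge_zero order_trans by blast
  then have "(Lip * N * e) * t \<le> (T * Lip * N) * e"
    using t Lip_nonneg mult_left_mono[of t T "Lip * N * e"] by (simp add: ac_simps)
  moreover have "(T * Lip * N) * e \<le> e / 2"
    using mult_right_mono[OF short_time \<open>0 \<le> e\<close>] by simp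
  ultimately show ?thesis by simp
qed

definition picard_iter :: "nat \<Rightarrow> nat \<Rightarrow> real \<Rightarrow> real \<times> real" where
  "picard_iter n = (picard ^^ n) (\<lambda>i t. P0 i)"

lemma picard_iter_Suc: "picard_iter (Suc n) = picard (picard_iter n)"
  by (simp add: picard_iter_def)

lemma admissible_picard_iter: "admissible (picard_iter n)"
proof (induction n)
  case 0
  show ?case using \<rho>_pos by (simp add: picard_iter_def admissible_def radial_slab_def)
qed (simp add: picard_iter_Suc admissible_picard)

lemma picard_iter_step:
  assumes "i \<in> {1..N}" and "t \<in> {0..T}"
  shows "norm (picard_iter (Suc n) i t - picard_iter n i t) \<le> T * (\<Sum>j\<in>{1..N}. norm (F P0 j)) * (1/2) ^ n"
  using assms
proof (induction n arbitrary: i t)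
  case 0
  have "norm (picard_iter 1 i t - picard_iter 1 i 0) \<le> norm (F P0 i) * (t - 0)"
    using picard_has_vector_derivative[OF admissible_picard_iter[of 0] 0(1)] 0(2)
    by (intro norm_diff_le_of_vector_derivative_bound_within) (auto simp: picard_iter_def)
  also have "\<dots> \<le> (\<Sum>j\<in>{1..N}. norm (F P0 j)) * T"
    using 0 by (intro mult_mono member_le_sum) (auto intro: sum_nonneg)
  finally show ?case by (simp add: picard_iter_def mult.commute)
next
  case (Suc n)
  have "norm (picard_iter (Suc (Suc n)) i t - picard_iter (Suc n) i t)
      \<le> T * (\<Sum>j\<in>{1..N}. norm (F P0 j)) * (1/2) ^ n / 2"
    unfolding picard_iter_Suc[of "Suc n"] picard_iter_Suc[of n]
    using Suc admissible_picard_iter[of "Suc n"]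
    by (intro picard_contraction admissible_picard_iter) (auto simp: picard_iter_Suc)
  then show ?case by simp
qed

definition solution :: "nat \<Rightarrow> real \<Rightarrow> real \<times> real" where
  "solution i t = lim (\<lambda>n. picard_iter n i t)"

lemma picard_iter_converges:
  assumes "i \<in> {1..N}" and "t \<in> {0..T}"
  shows "(\<lambda>n. picard_iter n i t) \<longlonglongrightarrow> solution i t"
    and "norm (solution i t - picard_iter n i t) \<le> 2 * T * (\<Sum>j\<in>{1..N}. norm (F P0 j)) * (1/2) ^ n"
  using geometric_steps_limit[of "\<lambda>n. picard_iter n i t", OF picard_iter_step[OF assms]]
  by (auto simp: solution_def mult_ac)

lemma admissible_solution: "admissible solution"
  unfolding admissible_def
proof (intro conjI ballI)
  fix i assume i: "i \<in> {1..N}"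
  define e0 where "e0 = 2 * T * (\<Sum>j\<in>{1..N}. norm (F P0 j))"
  have "(\<lambda>n. e0 * (1/2::real) ^ n) \<longlonglongrightarrow> 0"
    by (intro tendsto_mult_right_zero LIMSEQ_power_zero) auto
  have "uniform_limit {0..T} (\<lambda>n. picard_iter n i) (solution i) sequentially"
  proof (rule uniform_limitI)
    fix e :: real assume "e > 0"
    with \<open>(\<lambda>n. e0 * (1/2) ^ n) \<longlonglongrightarrow> 0\<close> have "\<forall>\<^sub>F n in sequentially. e0 * (1/2) ^ n < e"
      by (auto dest: order_tendstoD(2))
    then show "\<forall>\<^sub>F n in sequentially. \<forall>t\<in>{0..T}. dist (picard_iter n i t) (solution i t) < e"
    proof eventually_elim
      case (elim n)
      show ?case
      proof
        fix t assume "t \<in> {0..T}"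
        then have "norm (solution i t - picard_iter n i t) \<le> e0 * (1/2) ^ n"
          using picard_iter_converges(2)[OF i] unfolding e0_def by blast
        then show "dist (picard_iter n i t) (solution i t) < e"
          using elim by (simp add: dist_norm norm_minus_commute)
      qed
    qed
  qed
  moreover have "\<forall>\<^sub>F n in sequentially. continuous_on {0..T} (picard_iter n i)"
    using admissible_picard_iter i unfolding admissible_def by simp
  ultimately show "continuous_on {0..T} (solution i)"
    by (intro uniform_limit_theorem[where F = sequentially]) simp_all
next
  fix t assume t: "t \<in> {0..T}"
  show "(\<lambda>k. solution k t) \<in> radial_slab N P0 \<rho>"
    unfolding radial_slab_def
  proof (intro CollectI ballI)
    fix i assume i: "i \<in> {1..N}"
    have "(\<lambda>n. \<bar>snd (picard_iter n i t) - snd (P0 i)\<bar>) \<longlonglongrightarrow> \<bar>snd (solution i t) - snd (P0 i)\<bar>"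
      by (intro tendsto_intros picard_iter_converges(1)[OF i t])
    moreover have "\<forall>n. \<bar>snd (picard_iter n i t) - snd (P0 i)\<bar> \<le> \<rho>"
      using admissible_picard_iter i t unfolding admissible_def radial_slab_def by blast
    ultimately show "\<bar>snd (solution i t) - snd (P0 i)\<bar> \<le> \<rho>"
      using tendsto_upperbound[OF _ always_eventually trivial_limit_sequentially] by blast
  qed
qed

lemma picard_solution:
  assumes i: "i \<in> {1..N}" and t: "t \<in> {0..T}"
  shows "picard solution i t = solution i t"
proof -
  define e0 where "e0 = T * (\<Sum>j\<in>{1..N}. norm (F P0 j))"
  have bound: "norm (picard_iter (Suc n) i t - picard solution i t) \<le> e0 * (1/2) ^ n" for n
  proof -
    have "norm (picard (picard_iter n) i t - picard solution i t) \<le> (2 * e0 * (1/2) ^ n) / 2"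
    proof (rule picard_contraction[OF admissible_picard_iter admissible_solution _ i t])
      fix j s assume "j \<in> {1..N}" "s \<in> {0..T}"
      from picard_iter_converges(2)[OF this, of n]
      show "norm (picard_iter n j s - solution j s) \<le> 2 * e0 * (1/2) ^ n"
        unfolding e0_def by (simp add: norm_minus_commute)
    qed
    then show ?thesis by (simp add: picard_iter_Suc)
  qed
  have "(\<lambda>n. e0 * (1/2::real) ^ n) \<longlonglongrightarrow> 0"
    by (intro tendsto_mult_right_zero LIMSEQ_power_zero) auto
  then have "(\<lambda>n. picard_iter (Suc n) i t - picard solution i t) \<longlonglongrightarrow> 0"
    by (rule Lim_null_comparison[OF always_eventually, rotated]) (use bound in blast)
  then have "(\<lambda>n. picard_iter (Suc n) i t) \<longlonglongrightarrow> picard solution i t"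
    by (simp add: LIM_zero_iff)
  moreover have "(\<lambda>n. picard_iter (Suc n) i t) \<longlonglongrightarrow> solution i t"
    using picard_iter_converges(1)[OF i t] by (rule LIMSEQ_Suc)
  ultimately show ?thesis by (rule LIMSEQ_unique)
qed

theorem exists_solution:
  "\<exists>X. (\<forall>i\<in>{1..N}. X i 0 = P0 i) \<and> (\<forall>t\<in>{0..T}. (\<lambda>k. X k t) \<in> radial_slab N P0 \<rho>) \<and>
     (\<forall>t\<in>{0..T}. \<forall>i\<in>{1..N}. (X i has_vector_derivative F (\<lambda>k. X k t) i) (at t within {0..T}))"
proof (intro exI[of _ solution] conjI ballI)
  fix i assume "i \<in> {1..N}"
  then show "solution i 0 = P0 i" using picard_solution[of i 0] T_pos by simp
next
  fix t assume t: "t \<in> {0..T}"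
  then show "(\<lambda>k. solution k t) \<in> radial_slab N P0 \<rho>"
    using admissible_solution unfolding admissible_def by blast
  fix i assume i: "i \<in> {1..N}"
  show "(solution i has_vector_derivative F (\<lambda>k. solution k t) i) (at t within {0..T})"
    by (rule has_vector_derivative_transform[OF t _ picard_has_vector_derivative[OF admissible_solution i t]])
      (simp add: picard_solution[OF i])
qed

theorem solution_in_half_slab:
  assumes X0: "\<And>i. i \<in> {1..N} \<Longrightarrow> X i 0 = P0 i"
    and dX: "\<And>i t. i \<in> {1..N} \<Longrightarrow> t \<in> {0..T} \<Longrightarrow>
      (X i has_vector_derivative F (\<lambda>k. X k t) i) (at t within {0..T})"
    and t: "t \<in> {0..T}"
  shows "(\<lambda>k. X k t) \<in> radial_slab N P0 (\<rho> / 2)"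
  unfolding radial_slab_def
proof (intro CollectI ballI)
  fix i assume i: "i \<in> {1..N}"
  have "norm (snd (X i t) - snd (P0 i)) \<le> \<rho> / 2"
  proof (rule bootstrap_norm_bound[where g' = "\<lambda>j s. snd (F (\<lambda>k. X k s) j)", OF _ \<rho>_pos T_pos _ _ _ i t])
    fix j s assume j: "j \<in> {1..N}" and s: "s \<in> {0..T}"
    show "((\<lambda>s. snd (X j s) - snd (P0 j)) has_vector_derivative snd (F (\<lambda>k. X k s) j)) (at s within {0..T})"
      using bounded_linear.has_vector_derivative[OF bounded_linear_snd dX[OF j s]]
      by (auto intro!: derivative_eq_intros)
    assume "\<And>k. k \<in> {1..N} \<Longrightarrow> norm (snd (X k s) - snd (P0 k)) \<le> \<rho>"
    then have "(\<lambda>k. X k s) \<in> radial_slab N P0 \<rho>" by (simp add: radial_slab_def)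
    from radial_speed[OF this j]
    show "T * norm (snd (F (\<lambda>k. X k s) j)) \<le> \<rho> / 2" by simp
  qed (use X0 in auto)
  then show "\<bar>snd (X i t) - snd (P0 i)\<bar> \<le> \<rho> / 2" by simp
qed

end

section \<open>The point-vortex interaction\<close>

lemma norm_perp [simp]: "norm (perp v) = norm v"
  unfolding perp_def by (cases v) (simp add: norm_Pair add.commute)

lemma perp_diff: "perp (a - b) = perp a - perp b"
  unfolding perp_def by simp

lemma perp_scaleR: "perp (c *\<^sub>R a) = c *\<^sub>R perp a"
  unfolding perp_def by simp

lemma norm_ez [simp]: "norm ez = 1"
  unfolding ez_def by simp

definition vortex_kernel :: "real \<times> real \<Rightarrow> real \<times> real" where
  "vortex_kernel d = (1 / (norm d)\<^sup>2) *\<^sub>R perp d"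

definition interaction :: "nat \<Rightarrow> (nat \<Rightarrow> real \<times> real) \<Rightarrow> nat \<Rightarrow> real \<times> real" where
  "interaction N P i = (\<Sum>j\<in>{1..N} - {i}. vortex_kernel (P i - P j))"

lemma velX_interaction:
  "velX N \<gamma> \<epsilon> P i = (\<gamma> / (4 * pi * snd (P i))) *\<^sub>R ez + (\<gamma> / (2 * pi * lnabs \<epsilon>)) *\<^sub>R interaction N P i"
  unfolding velX_def interaction_def vortex_kernel_def by simp

lemma velY_interaction:
  "velY N \<gamma> rs P i = (\<gamma> / (2 * pi)) *\<^sub>R interaction N P i - (\<gamma> / (4 * pi * rs\<^sup>2) * snd (P i)) *\<^sub>R ez"
  unfolding velY_def interaction_def vortex_kernel_def by simp

lemma norm_vortex_kernel: "norm (vortex_kernel d) = 1 / norm d"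
  unfolding vortex_kernel_def by (simp add: power2_eq_square)

lemma vortex_kernel_scaleR: "0 < c \<Longrightarrow> vortex_kernel (c *\<^sub>R d) = (1 / c) *\<^sub>R vortex_kernel d"
  unfolding vortex_kernel_def by (simp add: perp_scaleR power2_eq_square field_simps)

lemma norm_vortex_kernel_diff:
  assumes "a \<noteq> 0" and "b \<noteq> 0"
  shows "norm (vortex_kernel a - vortex_kernel b) = norm (a - b) / (norm a * norm b)"
proof -
  have "vortex_kernel a - vortex_kernel b = perp (a /\<^sub>R (norm a)\<^sup>2 - b /\<^sub>R (norm b)\<^sup>2)"
    unfolding vortex_kernel_def by (simp add: perp_diff perp_scaleR divide_inverse_commute)
  then show ?thesis using norm_diff_sphere_inversion[OF assms] by simp
qed

lemma norm_interaction_le: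
  assumes "0 < s" and sep: "\<And>j. j \<in> {1..N} \<Longrightarrow> j \<noteq> i \<Longrightarrow> s \<le> norm (P i - P j)"
  shows "norm (interaction N P i) \<le> N / s"
proof -
  have "norm (interaction N P i) \<le> (\<Sum>j\<in>{1..N} - {i}. norm (vortex_kernel (P i - P j)))"
    unfolding interaction_def by (rule norm_sum)
  also have "\<dots> \<le> (\<Sum>j\<in>{1..N} - {i}. 1 / s)"
    using sep \<open>0 < s\<close> by (intro sum_mono) (simp add: norm_vortex_kernel frac_le)
  also have "\<dots> \<le> N / s"
    using card_mono[of "{1..N}" "{1..N} - {i}"] \<open>0 < s\<close> by (simp add: divide_right_mono)
  finally show ?thesis .
qed

lemma interaction_lipschitz:
  assumes "0 < s" and "i \<in> {1..N}"
    and sepP: "\<And>j. j \<in> {1..N} \<Longrightarrow> j \<noteq> i \<Longrightarrow> s \<le> norm (P i - P j)"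
    and sepQ: "\<And>j. j \<in> {1..N} \<Longrightarrow> j \<noteq> i \<Longrightarrow> s \<le> norm (Q i - Q j)"
  shows "norm (interaction N P i - interaction N Q i) \<le> (real N + 1) / s\<^sup>2 * (\<Sum>j\<in>{1..N}. norm (P j - Q j))"
proof -
  define a where "a j = norm (P j - Q j)" for j
  define S where "S = (\<Sum>j\<in>{1..N}. a j)"
  have "norm (interaction N P i - interaction N Q i)
      \<le> (\<Sum>j\<in>{1..N} - {i}. norm (vortex_kernel (P i - P j) - vortex_kernel (Q i - Q j)))"
    unfolding interaction_def sum_subtractf[symmetric] by (rule norm_sum)
  also have "\<dots> \<le> (\<Sum>j\<in>{1..N} - {i}. (a i + a j) / s\<^sup>2)"
  proof (rule sum_mono)
    fix j assume "j \<in> {1..N} - {i}"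
    then have p: "s \<le> norm (P i - P j)" and q: "s \<le> norm (Q i - Q j)" using sepP sepQ by auto
    have "norm (vortex_kernel (P i - P j) - vortex_kernel (Q i - Q j))
        = norm ((P i - Q i) - (P j - Q j)) / (norm (P i - P j) * norm (Q i - Q j))"
      using p q \<open>0 < s\<close> by (subst norm_vortex_kernel_diff) (auto simp: algebra_simps)
    also have "\<dots> \<le> (a i + a j) / (s * s)"
      unfolding a_def using p q \<open>0 < s\<close>
      by (intro frac_le norm_triangle_ineq4 mult_mono) auto
    finally show "norm (vortex_kernel (P i - P j) - vortex_kernel (Q i - Q j)) \<le> (a i + a j) / s\<^sup>2"
      by (simp add: power2_eq_square)
  qed
  also have "\<dots> = (card ({1..N} - {i}) * a i + (\<Sum>j\<in>{1..N} - {i}. a j)) / s\<^sup>2"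
    by (simp add: sum_divide_distrib[symmetric] sum.distrib)
  also have "\<dots> \<le> (N * S + S) / s\<^sup>2"
  proof -
    have "a i \<le> S" unfolding S_def a_def using \<open>i \<in> {1..N}\<close> by (intro member_le_sum) auto
    then have "card ({1..N} - {i}) * a i \<le> N * S"
      using card_mono[of "{1..N}" "{1..N} - {i}"] by (intro mult_mono) (auto simp: a_def)
    moreover have "(\<Sum>j\<in>{1..N} - {i}. a j) \<le> S" unfolding S_def a_def by (intro sum_mono2) auto
    ultimately show ?thesis by (intro divide_right_mono) auto
  qed
  also have "\<dots> = (real N + 1) / s\<^sup>2 * S" by (simp add: field_simps)
  finally show ?thesis unfolding S_def a_def .
qed

lemma interaction_scaleR:
  assumes "0 < c" and "\<And>j. j \<in> {1..N} \<Longrightarrow> Q i - Q j = c *\<^sub>R (P i - P j)"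
  shows "interaction N Q i = (1 / c) *\<^sub>R interaction N P i"
  unfolding interaction_def scaleR_sum_right
  by (rule sum.cong) (use assms vortex_kernel_scaleR in auto)

lemma d0_pos_and_separates:
  assumes "N \<ge> 2" and inj: "inj_on (\<lambda>i. snd (Y0 i)) {1..N}"
  shows "d0 N Y0 > 0"
    and "\<forall>j\<in>{1..N}. \<forall>k\<in>{1..N}. j \<noteq> k \<longrightarrow> 4 * d0 N Y0 \<le> \<bar>snd (Y0 j) - snd (Y0 k)\<bar>"
proof -
  define A where "A = {\<bar>snd (Y0 j) - snd (Y0 k)\<bar> | j k. j \<in> {1..N} \<and> k \<in> {1..N} \<and> j \<noteq> k}"
  have "A \<subseteq> (\<lambda>(j, k). \<bar>snd (Y0 j) - snd (Y0 k)\<bar>) ` ({1..N} \<times> {1..N})"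
    unfolding A_def by auto
  then have "finite A" by (rule finite_subset) simp
  have "\<bar>snd (Y0 1) - snd (Y0 2)\<bar> \<in> A"
    unfolding A_def using \<open>N \<ge> 2\<close> by (intro CollectI exI[of _ "1::nat"] exI[of _ "2::nat"]) auto
  then have "A \<noteq> {}" by blast
  have "0 < x" if "x \<in> A" for x
  proof -
    obtain j k where "x = \<bar>snd (Y0 j) - snd (Y0 k)\<bar>" "j \<in> {1..N}" "k \<in> {1..N}" "j \<noteq> k"
      using \<open>x \<in> A\<close> unfolding A_def by blast
    with inj_onD[OF inj, of j k] show ?thesis by auto
  qed
  then have "0 < Min A" using Min_in[OF \<open>finite A\<close> \<open>A \<noteq> {}\<close>] by blast
  then show "d0 N Y0 > 0" unfolding d0_def A_def[symmetric] by simp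
  show "\<forall>j\<in>{1..N}. \<forall>k\<in>{1..N}. j \<noteq> k \<longrightarrow> 4 * d0 N Y0 \<le> \<bar>snd (Y0 j) - snd (Y0 k)\<bar>"
  proof (intro ballI impI)
    fix j k assume "j \<in> {1..N}" "k \<in> {1..N}" "j \<noteq> k"
    then have "\<bar>snd (Y0 j) - snd (Y0 k)\<bar> \<in> A" unfolding A_def by blast
    then show "4 * d0 N Y0 \<le> \<bar>snd (Y0 j) - snd (Y0 k)\<bar>"
      using Min_le[OF \<open>finite A\<close>] unfolding d0_def A_def[symmetric] by simp
  qed
qed

section \<open>Vortex rings\<close>

locale vortex_rings =
  fixes N :: nat and Xs :: "real \<times> real" and Y0 :: "nat \<Rightarrow> real \<times> real" and \<gamma> h0 :: real
  assumes two_le_N: "N \<ge> 2" and r_pos: "snd Xs > 0"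
    and distinct_radii: "inj_on (\<lambda>i. snd (Y0 i)) {1..N}"
    and \<gamma>_pos: "\<gamma> > 0" and h0_pos: "h0 > 0"
begin

abbreviation r :: real where "r \<equiv> snd Xs"

abbreviation \<delta> :: real where "\<delta> \<equiv> d0 N Y0"

lemma \<delta>_pos: "0 < \<delta>"
  using d0_pos_and_separates(1)[OF two_le_N distinct_radii] .

lemma Y0_separated: "\<forall>j\<in>{1..N}. \<forall>k\<in>{1..N}. j \<noteq> k \<longrightarrow> 4 * \<delta> \<le> \<bar>snd (Y0 j) - snd (Y0 k)\<bar>"
  using d0_pos_and_separates(2)[OF two_le_N distinct_radii] .

definition Y0_bound :: real where
  "Y0_bound = (\<Sum>i\<in>{1..N}. norm (Y0 i))"

lemma norm_Y0_le: "i \<in> {1..N} \<Longrightarrow> norm (Y0 i) \<le> Y0_bound"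
  unfolding Y0_bound_def by (intro member_le_sum) auto

lemma Y0_bound_nonneg: "0 \<le> Y0_bound"
  unfolding Y0_bound_def by (simp add: sum_nonneg)

definition lipschitz_const :: real where
  "lipschitz_const = \<gamma> * (real N + 1) / (8 * pi * \<delta>\<^sup>2) + \<gamma> / (pi * r\<^sup>2)"

definition velY_bound :: real where
  "velY_bound = \<gamma> * N / (4 * pi * \<delta>) + \<gamma> * (Y0_bound + \<delta>) / (4 * pi * r\<^sup>2)"

definition consistency_const :: real where
  "consistency_const = \<gamma> * (Y0_bound + \<delta>)\<^sup>2 / (2 * pi * r ^ 3)"

lemma consistency_const_nonneg: "0 \<le> consistency_const"
  unfolding consistency_const_def using \<gamma>_pos r_pos by simp

lemma velY_bound_nonneg: "0 \<le> velY_bound"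
  unfolding velY_bound_def using \<gamma>_pos \<delta>_pos r_pos Y0_bound_nonneg by simp

lemma lipschitz_const_pos: "0 < lipschitz_const"
  unfolding lipschitz_const_def using \<gamma>_pos r_pos \<delta>_pos by (intro add_nonneg_pos) auto

lemma Y_slab_separated:
  "P \<in> radial_slab N Y0 \<delta> \<Longrightarrow> j \<in> {1..N} \<Longrightarrow> k \<in> {1..N} \<Longrightarrow> j \<noteq> k \<Longrightarrow> 2 * \<delta> \<le> norm (P j - P k)"
  using radial_slab_separated Y0_separated by blast

lemma norm_interaction_Y_slab:
  "P \<in> radial_slab N Y0 \<delta> \<Longrightarrow> i \<in> {1..N} \<Longrightarrow> norm (interaction N P i) \<le> N / (2 * \<delta>)"
  using \<delta>_pos by (intro norm_interaction_le) (auto intro: Y_slab_separated)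

lemma abs_snd_velY_le:
  assumes "P \<in> radial_slab N Y0 \<delta>" and "i \<in> {1..N}"
  shows "\<bar>snd (velY N \<gamma> r P i)\<bar> \<le> \<gamma> * N / (4 * pi * \<delta>)"
proof -
  have "\<bar>snd (velY N \<gamma> r P i)\<bar> = \<gamma> / (2 * pi) * \<bar>snd (interaction N P i)\<bar>"
    using \<gamma>_pos by (simp add: velY_interaction ez_def abs_mult)
  also have "\<dots> \<le> \<gamma> / (2 * pi) * (N / (2 * \<delta>))"
    using abs_snd_le_norm[of "interaction N P i"] norm_interaction_Y_slab[OF assms] \<gamma>_pos
    by (intro mult_left_mono) auto
  finally show ?thesis by simp
qed

lemma norm_velY_le:
  assumes "P \<in> radial_slab N Y0 \<delta>" and "i \<in> {1..N}"
  shows "norm (velY N \<gamma> r P i) \<le> velY_bound"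
proof -
  have "\<bar>snd (P i)\<bar> \<le> Y0_bound + \<delta>"
    using assms abs_snd_le_norm[of "Y0 i"] norm_Y0_le[OF assms(2)] unfolding radial_slab_def by force
  have "norm (velY N \<gamma> r P i)
      \<le> norm ((\<gamma> / (2 * pi)) *\<^sub>R interaction N P i) + norm ((\<gamma> / (4 * pi * r\<^sup>2) * snd (P i)) *\<^sub>R ez)"
    unfolding velY_interaction by (rule norm_triangle_ineq4)
  also have "\<dots> = \<gamma> / (2 * pi) * norm (interaction N P i) + \<gamma> / (4 * pi * r\<^sup>2) * \<bar>snd (P i)\<bar>"
    using \<gamma>_pos by (simp add: abs_mult)
  also have "\<dots> \<le> \<gamma> / (2 * pi) * (N / (2 * \<delta>)) + \<gamma> / (4 * pi * r\<^sup>2) * (Y0_bound + \<delta>)"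
    using norm_interaction_Y_slab[OF assms] \<open>\<bar>snd (P i)\<bar> \<le> Y0_bound + \<delta>\<close> \<gamma>_pos
    by (intro add_mono mult_left_mono) auto
  finally show ?thesis unfolding velY_bound_def by simp
qed

lemma velY_lipschitz:
  assumes "P \<in> radial_slab N Y0 \<delta>" and "Q \<in> radial_slab N Y0 \<delta>" and i: "i \<in> {1..N}"
  shows "norm (velY N \<gamma> r P i - velY N \<gamma> r Q i) \<le> lipschitz_const * (\<Sum>j\<in>{1..N}. norm (P j - Q j))"
proof -
  define S where "S = (\<Sum>j\<in>{1..N}. norm (P j - Q j))"
  have "\<bar>snd (P i) - snd (Q i)\<bar> \<le> S"
    unfolding S_def using abs_snd_le_norm[of "P i - Q i"] member_le_sum[OF i, of "\<lambda>j. norm (P j - Q j)"]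
    by simp
  have "norm (interaction N P i - interaction N Q i) \<le> (real N + 1) / (2 * \<delta>)\<^sup>2 * S"
    unfolding S_def using \<delta>_pos i assms(1,2)
    by (intro interaction_lipschitz) (auto intro: Y_slab_separated)
  have "velY N \<gamma> r P i - velY N \<gamma> r Q i = (\<gamma> / (2 * pi)) *\<^sub>R (interaction N P i - interaction N Q i)
      - (\<gamma> / (4 * pi * r\<^sup>2) * (snd (P i) - snd (Q i))) *\<^sub>R ez"
    unfolding velY_interaction ez_def by (simp add: prod_eq_iff algebra_simps diff_divide_distrib)
  then have "norm (velY N \<gamma> r P i - velY N \<gamma> r Q i)
      \<le> norm ((\<gamma> / (2 * pi)) *\<^sub>R (interaction N P i - interaction N Q i))
        + norm ((\<gamma> / (4 * pi * r\<^sup>2) * (snd (P i) - snd (Q i))) *\<^sub>R ez)"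
    by (simp only: norm_triangle_ineq4)
  also have "\<dots> = \<gamma> / (2 * pi) * norm (interaction N P i - interaction N Q i)
        + \<gamma> / (4 * pi * r\<^sup>2) * \<bar>snd (P i) - snd (Q i)\<bar>"
    using \<gamma>_pos by (simp add: abs_mult)
  also have "\<dots> \<le> \<gamma> / (2 * pi) * ((real N + 1) / (2 * \<delta>)\<^sup>2 * S) + \<gamma> / (4 * pi * r\<^sup>2) * S"
    using \<open>norm (interaction N P i - interaction N Q i) \<le> _\<close> \<open>\<bar>snd (P i) - snd (Q i)\<bar> \<le> S\<close> \<gamma>_pos
    by (intro add_mono mult_left_mono) auto
  also have "\<dots> \<le> lipschitz_const * S"
  proof -
    have "0 \<le> S" unfolding S_def by (simp add: sum_nonneg)
    then have "\<gamma> / (4 * pi * r\<^sup>2) * S \<le> \<gamma> / (pi * r\<^sup>2) * S"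
      using \<gamma>_pos r_pos by (intro mult_right_mono) (auto simp: field_simps)
    then show ?thesis unfolding lipschitz_const_def by (simp add: field_simps power2_eq_square)
  qed
  finally show ?thesis unfolding S_def .
qed

lemma exists_short_time:
  "\<exists>T>0. T * \<gamma> * N \<le> 2 * pi * \<delta>\<^sup>2 \<and> T * lipschitz_const * N \<le> 1/2 \<and> T * \<gamma> / (2 * pi * r) \<le> h0 / 2"
proof -
  define T where "T = Min {2 * pi * \<delta>\<^sup>2 / (\<gamma> * N), 1 / (2 * lipschitz_const * N), pi * r * h0 / \<gamma>}"
  have N: "0 < real N" using two_le_N by simp
  have "0 < T" unfolding T_def using \<delta>_pos \<gamma>_pos lipschitz_const_pos r_pos h0_pos N by simp
  moreover have "T \<le> 2 * pi * \<delta>\<^sup>2 / (\<gamma> * N)" "T \<le> 1 / (2 * lipschitz_const * N)" "T \<le> pi * r * h0 / \<gamma>"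
    unfolding T_def by simp_all
  ultimately show ?thesis
    using \<gamma>_pos lipschitz_const_pos r_pos N
    by (intro exI[of _ T]) (auto simp: pos_le_divide_eq field_simps)
qed

end

locale vortex_rings_short_time = vortex_rings +
  fixes T :: real
  assumes T_pos: "0 < T"
    and radial_time: "T * \<gamma> * N \<le> 2 * pi * \<delta>\<^sup>2"
    and lipschitz_time: "T * lipschitz_const * N \<le> 1/2"
    and axial_time: "T * \<gamma> / (2 * pi * r) \<le> h0 / 2"
begin

lemma radial_drift_le: "T * (\<gamma> * N / (4 * pi * \<delta>)) \<le> \<delta> / 2"
  using radial_time \<delta>_pos by (simp add: field_simps power2_eq_square)

sublocale Y: slab_field N "velY N \<gamma> r" Y0 \<delta> T lipschitz_const
proof
  fix P i assume "P \<in> radial_slab N Y0 \<delta>" "i \<in> {1..N}"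
  then have "T * \<bar>snd (velY N \<gamma> r P i)\<bar> \<le> T * (\<gamma> * N / (4 * pi * \<delta>))"
    using T_pos by (intro mult_left_mono abs_snd_velY_le) auto
  then show "T * \<bar>snd (velY N \<gamma> r P i)\<bar> \<le> \<delta> / 2" using radial_drift_le by linarith
qed (use T_pos \<delta>_pos lipschitz_const_pos lipschitz_time velY_lipschitz in auto)

lemma exists_Y_sol: "\<exists>Y. is_Y_sol N \<gamma> r Y0 T Y"
proof -
  obtain Y where Y0: "\<forall>i\<in>{1..N}. Y i 0 = Y0 i" and slab: "\<forall>t\<in>{0..T}. (\<lambda>k. Y k t) \<in> radial_slab N Y0 \<delta>"
    and dY: "\<forall>t\<in>{0..T}. \<forall>i\<in>{1..N}. (Y i has_vector_derivative velY N \<gamma> r (\<lambda>k. Y k t) i) (at t within {0..T})"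
    using Y.exists_solution by blast
  have "Y i t \<noteq> Y j t" if "t \<in> {0..T}" "i \<in> {1..N}" "j \<in> {1..N}" "i \<noteq> j" for t i j
    using Y_slab_separated[OF slab[rule_format, OF that(1)] that(2-4)] \<delta>_pos by auto
  then show ?thesis using Y0 dY unfolding is_Y_sol_def by blast
qed

lemma Y_sol_in_half_slab:
  assumes "is_Y_sol N \<gamma> r Y0 T Y" and "t \<in> {0..T}"
  shows "(\<lambda>k. Y k t) \<in> radial_slab N Y0 (\<delta> / 2)"
  using assms by (intro Y.solution_in_half_slab) (auto simp: is_Y_sol_def)

lemma Y_sol_in_slab:
  assumes "is_Y_sol N \<gamma> r Y0 T Y" and "t \<in> {0..T}"
  shows "(\<lambda>k. Y k t) \<in> radial_slab N Y0 \<delta>"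
  using Y_sol_in_half_slab[OF assms] radial_slab_mono[of "\<delta> / 2" \<delta>] \<delta>_pos by auto

text \<open>For \<open>sqrt (lnabs \<epsilon>) \<ge> sigma_min\<close> the radii of \<open>X\<^sup>\<epsilon>\<close> stay above \<open>r / 2\<close> and the axial excursions
  of \<open>X\<^sup>\<epsilon>\<close> and \<open>Xtilde\<^sup>\<epsilon>\<close> stay within \<open>h0\<close>.\<close>

definition sigma_min :: real where
  "sigma_min = 1 + 2 * (Y0_bound + \<delta>) / r + 2 * (Y0_bound + T * (\<gamma> * N / (4 * pi * \<delta>))) / h0
     + 2 * (Y0_bound + T * velY_bound) / h0"

lemma sigma_min_bounds:
  "1 \<le> sigma_min" "2 * (Y0_bound + \<delta>) / r \<le> sigma_min"
  "2 * (Y0_bound + T * (\<gamma> * N / (4 * pi * \<delta>))) / h0 \<le> sigma_min"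
  "2 * (Y0_bound + T * velY_bound) / h0 \<le> sigma_min"
proof -
  have "0 \<le> 2 * (Y0_bound + \<delta>) / r" "0 \<le> 2 * (Y0_bound + T * (\<gamma> * N / (4 * pi * \<delta>))) / h0"
    "0 \<le> 2 * (Y0_bound + T * velY_bound) / h0"
    using velY_bound_nonneg Y0_bound_nonneg \<delta>_pos r_pos h0_pos T_pos \<gamma>_pos by auto
  then show "1 \<le> sigma_min" "2 * (Y0_bound + \<delta>) / r \<le> sigma_min"
    "2 * (Y0_bound + T * (\<gamma> * N / (4 * pi * \<delta>))) / h0 \<le> sigma_min"
    "2 * (Y0_bound + T * velY_bound) / h0 \<le> sigma_min"
    unfolding sigma_min_def by linarith+
qed

lemma sigma_min_le_sqrt_lnabs:
  assumes "0 < \<epsilon>" and "\<epsilon> \<le> exp (- sigma_min\<^sup>2)"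
  shows "sigma_min \<le> sqrt (lnabs \<epsilon>)"
proof -
  have "ln \<epsilon> \<le> - sigma_min\<^sup>2" using assms by (metis ln_exp ln_le_cancel_iff exp_gt_zero)
  then have "sigma_min\<^sup>2 \<le> lnabs \<epsilon>" unfolding lnabs_def by linarith
  then show ?thesis using sigma_min_bounds(1) by (intro real_le_rsqrt) simp
qed

definition error_const :: real where
  "error_const = 2 * N * T * consistency_const + 1"

lemma error_const_pos: "0 < error_const"
proof -
  have "0 \<le> 2 * N * T * consistency_const" using consistency_const_nonneg T_pos by simp
  then show ?thesis unfolding error_const_def by linarith
qed

end

locale vortex_rings_eps = vortex_rings_short_time +
  fixes \<epsilon> :: real
  assumes \<epsilon>_pos: "0 < \<epsilon>" and sigma_large: "sigma_min \<le> sqrt (lnabs \<epsilon>)"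
begin

abbreviation \<sigma> :: real where "\<sigma> \<equiv> sqrt (lnabs \<epsilon>)"

abbreviation X0 :: "nat \<Rightarrow> real \<times> real" where "X0 \<equiv> X0eps Xs Y0 \<epsilon>"

lemma \<sigma>_ge_1: "1 \<le> \<sigma>"
  using sigma_min_bounds(1) sigma_large by linarith

lemma \<sigma>_pos: "0 < \<sigma>"
  using \<sigma>_ge_1 by linarith

lemma \<sigma>_squared: "\<sigma> * \<sigma> = lnabs \<epsilon>"
  using \<sigma>_pos by (simp add: lnabs_def)

lemma radius_margin: "(Y0_bound + \<delta>) / \<sigma> \<le> r / 2"
proof -
  have "2 * (Y0_bound + \<delta>) / r \<le> \<sigma>" using sigma_min_bounds(2) sigma_large by linarith
  then show ?thesis using r_pos \<sigma>_pos by (simp add: field_simps)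
qed

lemma axial_margin_X: "(Y0_bound + T * (\<gamma> * N / (4 * pi * \<delta>))) / \<sigma> \<le> h0 / 2"
proof -
  have "2 * (Y0_bound + T * (\<gamma> * N / (4 * pi * \<delta>))) / h0 \<le> \<sigma>" using sigma_min_bounds(3) sigma_large by linarith
  then show ?thesis using h0_pos \<sigma>_pos by (simp add: field_simps)
qed

lemma axial_margin_Y: "(Y0_bound + T * velY_bound) / \<sigma> \<le> h0 / 2"
proof -
  have "2 * (Y0_bound + T * velY_bound) / h0 \<le> \<sigma>" using sigma_min_bounds(4) sigma_large by linarith
  then show ?thesis using h0_pos \<sigma>_pos by (simp add: field_simps)
qed

lemma \<delta>_over_\<sigma>_pos: "0 < \<delta> / \<sigma>"
  using \<delta>_pos \<sigma>_pos by simp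

lemma X0_eq: "X0 i = Xs + (1 / \<sigma>) *\<^sub>R Y0 i"
  unfolding X0eps_def ..

lemma X0_separated: "\<forall>j\<in>{1..N}. \<forall>k\<in>{1..N}. j \<noteq> k \<longrightarrow> 4 * (\<delta> / \<sigma>) \<le> \<bar>snd (X0 j) - snd (X0 k)\<bar>"
proof (intro ballI impI)
  fix j k assume "j \<in> {1..N}" "k \<in> {1..N}" "j \<noteq> k"
  then have "4 * \<delta> / \<sigma> \<le> \<bar>snd (Y0 j) - snd (Y0 k)\<bar> / \<sigma>"
    using Y0_separated \<sigma>_pos by (simp add: divide_right_mono)
  also have "\<dots> = \<bar>(snd (Y0 j) - snd (Y0 k)) / \<sigma>\<bar>"
    using \<sigma>_pos by simp
  also have "\<dots> = \<bar>snd (X0 j) - snd (X0 k)\<bar>"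
    by (simp add: X0_eq diff_divide_distrib)
  finally show "4 * (\<delta> / \<sigma>) \<le> \<bar>snd (X0 j) - snd (X0 k)\<bar>" by simp
qed

lemma X_slab_separated:
  "P \<in> radial_slab N X0 (\<delta> / \<sigma>) \<Longrightarrow> j \<in> {1..N} \<Longrightarrow> k \<in> {1..N} \<Longrightarrow> j \<noteq> k \<Longrightarrow>
    2 * (\<delta> / \<sigma>) \<le> norm (P j - P k)"
  using radial_slab_separated X0_separated by blast

lemma X_slab_radius:
  assumes "P \<in> radial_slab N X0 (\<delta> / \<sigma>)" and "i \<in> {1..N}"
  shows "\<bar>snd (P i) - r\<bar> \<le> (Y0_bound + \<delta>) / \<sigma>" and "r / 2 \<le> snd (P i)"
proof -
  have "\<bar>snd (X0 i) - r\<bar> \<le> Y0_bound / \<sigma>"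
    using abs_snd_le_norm[of "Y0 i"] norm_Y0_le[OF assms(2)] \<sigma>_pos
    by (simp add: X0_eq divide_right_mono)
  moreover have "\<bar>snd (P i) - snd (X0 i)\<bar> \<le> \<delta> / \<sigma>" using assms unfolding radial_slab_def by blast
  ultimately show "\<bar>snd (P i) - r\<bar> \<le> (Y0_bound + \<delta>) / \<sigma>" by (simp add: add_divide_distrib)
  then show "r / 2 \<le> snd (P i)" using radius_margin by linarith
qed

lemma norm_interaction_X_slab:
  assumes "P \<in> radial_slab N X0 (\<delta> / \<sigma>)" and "i \<in> {1..N}"
  shows "norm (interaction N P i) \<le> N / (2 * (\<delta> / \<sigma>))"
proof (rule norm_interaction_le)
  show "0 < 2 * (\<delta> / \<sigma>)" using \<delta>_pos \<sigma>_pos by simp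
  show "2 * (\<delta> / \<sigma>) \<le> norm (P i - P j)" if "j \<in> {1..N}" "j \<noteq> i" for j
    using X_slab_separated[OF assms that(1)] that(2) by blast
qed

lemma \<sigma>_div_lnabs: "\<sigma> / lnabs \<epsilon> = 1 / \<sigma>"
proof -
  have "s / (s * s) = 1 / s" if "0 < s" for s :: real using that by simp
  from this[OF \<sigma>_pos] show ?thesis by (simp only: \<sigma>_squared)
qed

lemma interaction_coefficient: "\<gamma> / (2 * pi * lnabs \<epsilon>) * (N / (2 * (\<delta> / \<sigma>))) = \<gamma> * N / (4 * pi * \<delta>) / \<sigma>"
proof -
  have "\<gamma> / (2 * pi * lnabs \<epsilon>) * (N / (2 * (\<delta> / \<sigma>))) = \<gamma> * N / (4 * pi * \<delta>) * (\<sigma> / lnabs \<epsilon>)"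
    using \<delta>_pos \<sigma>_pos by (simp add: field_simps)
  then show ?thesis unfolding \<sigma>_div_lnabs by simp
qed

lemma abs_snd_velX_le:
  assumes "P \<in> radial_slab N X0 (\<delta> / \<sigma>)" and "i \<in> {1..N}"
  shows "\<bar>snd (velX N \<gamma> \<epsilon> P i)\<bar> \<le> \<gamma> * N / (4 * pi * \<delta>) / \<sigma>"
proof -
  have "lnabs \<epsilon> > 0" using \<sigma>_pos by simp
  then have "\<bar>snd (velX N \<gamma> \<epsilon> P i)\<bar> = \<gamma> / (2 * pi * lnabs \<epsilon>) * \<bar>snd (interaction N P i)\<bar>"
    using \<gamma>_pos by (simp add: velX_interaction ez_def abs_mult)
  also have "\<dots> \<le> \<gamma> / (2 * pi * lnabs \<epsilon>) * (N / (2 * (\<delta> / \<sigma>)))"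
    using abs_snd_le_norm[of "interaction N P i"] norm_interaction_X_slab[OF assms] \<gamma>_pos \<open>lnabs \<epsilon> > 0\<close>
    by (intro mult_left_mono) auto
  finally show ?thesis unfolding interaction_coefficient .
qed

lemma lipschitz_coefficient:
  "\<gamma> / (2 * pi * lnabs \<epsilon>) * ((real N + 1) / (2 * (\<delta> / \<sigma>))\<^sup>2) = \<gamma> * (real N + 1) / (8 * pi * \<delta>\<^sup>2)"
proof -
  have "c / (2 * pi * (s * s)) * (m / (2 * (d / s))\<^sup>2) = c * m / (8 * pi * d\<^sup>2)"
    if "0 < s" "0 < d" for c m d s :: real
    using that by (simp add: field_simps power2_eq_square)
  from this[OF \<sigma>_pos \<delta>_pos, of \<gamma> "real N + 1"] show ?thesis by (simp only: \<sigma>_squared)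
qed

lemma norm_velX_le:
  assumes "P \<in> radial_slab N X0 (\<delta> / \<sigma>)" and "i \<in> {1..N}"
  shows "norm (velX N \<gamma> \<epsilon> P i) \<le> \<gamma> / (2 * pi * r) + \<gamma> * N / (4 * pi * \<delta>) / \<sigma>"
proof -
  have a: "r / 2 \<le> snd (P i)" by (rule X_slab_radius(2)[OF assms])
  have "norm (velX N \<gamma> \<epsilon> P i)
      \<le> norm ((\<gamma> / (4 * pi * snd (P i))) *\<^sub>R ez) + norm ((\<gamma> / (2 * pi * lnabs \<epsilon>)) *\<^sub>R interaction N P i)"
    unfolding velX_interaction by (rule norm_triangle_ineq)
  also have "\<dots> = \<gamma> / (4 * pi * snd (P i)) + \<gamma> / (2 * pi * lnabs \<epsilon>) * norm (interaction N P i)"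
    using \<gamma>_pos a r_pos \<sigma>_pos by (simp add: abs_mult)
  also have "\<dots> \<le> \<gamma> / (4 * pi * (r / 2)) + \<gamma> / (2 * pi * lnabs \<epsilon>) * (N / (2 * (\<delta> / \<sigma>)))"
    using a r_pos \<gamma>_pos \<sigma>_pos norm_interaction_X_slab[OF assms]
    by (intro add_mono divide_left_mono mult_left_mono mult_pos_pos) auto
  finally show ?thesis unfolding interaction_coefficient by simp
qed

lemma velX_lipschitz:
  assumes P: "P \<in> radial_slab N X0 (\<delta> / \<sigma>)" and Q: "Q \<in> radial_slab N X0 (\<delta> / \<sigma>)"
    and i: "i \<in> {1..N}"
  shows "norm (velX N \<gamma> \<epsilon> P i - velX N \<gamma> \<epsilon> Q i) \<le> lipschitz_const * (\<Sum>j\<in>{1..N}. norm (P j - Q j))"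
proof -
  define S where "S = (\<Sum>j\<in>{1..N}. norm (P j - Q j))"
  have "lnabs \<epsilon> > 0" using \<sigma>_pos by simp
  have "\<bar>snd (P i) - snd (Q i)\<bar> \<le> S"
    unfolding S_def using abs_snd_le_norm[of "P i - Q i"] member_le_sum[OF i, of "\<lambda>j. norm (P j - Q j)"]
    by simp
  have "\<bar>1 / snd (P i) - 1 / snd (Q i)\<bar> \<le> 4 / r\<^sup>2 * \<bar>snd (P i) - snd (Q i)\<bar>"
    by (rule abs_inverse_diff_le[OF r_pos X_slab_radius(2)[OF P i] X_slab_radius(2)[OF Q i]])
  also have "\<dots> \<le> 4 / r\<^sup>2 * S"
    using \<open>\<bar>snd (P i) - snd (Q i)\<bar> \<le> S\<close> by (rule mult_left_mono) simp
  finally have inv: "\<bar>1 / snd (P i) - 1 / snd (Q i)\<bar> \<le> 4 / r\<^sup>2 * S" .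
  have int: "norm (interaction N P i - interaction N Q i) \<le> (real N + 1) / (2 * (\<delta> / \<sigma>))\<^sup>2 * S"
    unfolding S_def
    by (rule interaction_lipschitz) (use \<delta>_pos \<sigma>_pos i X_slab_separated[OF P i] X_slab_separated[OF Q i] in auto)
  have "velX N \<gamma> \<epsilon> P i - velX N \<gamma> \<epsilon> Q i = (\<gamma> / (4 * pi) * (1 / snd (P i) - 1 / snd (Q i))) *\<^sub>R ez
      + (\<gamma> / (2 * pi * lnabs \<epsilon>)) *\<^sub>R (interaction N P i - interaction N Q i)"
    unfolding velX_interaction ez_def by (simp add: prod_eq_iff algebra_simps diff_divide_distrib)
  then have "norm (velX N \<gamma> \<epsilon> P i - velX N \<gamma> \<epsilon> Q i)
      \<le> norm ((\<gamma> / (4 * pi) * (1 / snd (P i) - 1 / snd (Q i))) *\<^sub>R ez)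
        + norm ((\<gamma> / (2 * pi * lnabs \<epsilon>)) *\<^sub>R (interaction N P i - interaction N Q i))"
    by (simp only: norm_triangle_ineq)
  also have "\<dots> = \<gamma> / (4 * pi) * \<bar>1 / snd (P i) - 1 / snd (Q i)\<bar>
      + \<gamma> / (2 * pi * lnabs \<epsilon>) * norm (interaction N P i - interaction N Q i)"
    using \<gamma>_pos \<open>lnabs \<epsilon> > 0\<close> by (simp add: abs_mult)
  also have "\<dots> \<le> \<gamma> / (4 * pi) * (4 / r\<^sup>2 * S)
      + \<gamma> / (2 * pi * lnabs \<epsilon>) * ((real N + 1) / (2 * (\<delta> / \<sigma>))\<^sup>2 * S)"
    using inv int \<gamma>_pos \<open>lnabs \<epsilon> > 0\<close> by (intro add_mono mult_left_mono) auto
  also have "\<dots> = (\<gamma> / (4 * pi) * (4 / r\<^sup>2)) * S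
      + (\<gamma> / (2 * pi * lnabs \<epsilon>) * ((real N + 1) / (2 * (\<delta> / \<sigma>))\<^sup>2)) * S"
    by (simp only: mult.assoc)
  also have "\<dots> = lipschitz_const * S"
    unfolding lipschitz_coefficient lipschitz_const_def by (simp add: field_simps)
  finally show ?thesis unfolding S_def .
qed

sublocale X: slab_field N "velX N \<gamma> \<epsilon>" X0 "\<delta> / \<sigma>" T lipschitz_const
proof
  fix P i assume "P \<in> radial_slab N X0 (\<delta> / \<sigma>)" "i \<in> {1..N}"
  then have "T * \<bar>snd (velX N \<gamma> \<epsilon> P i)\<bar> \<le> T * (\<gamma> * N / (4 * pi * \<delta>) / \<sigma>)"
    using T_pos by (intro mult_left_mono abs_snd_velX_le) auto
  also have "\<dots> = T * (\<gamma> * N / (4 * pi * \<delta>)) / \<sigma>" by simp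
  also have "\<dots> \<le> (\<delta> / 2) / \<sigma>"
    by (rule divide_right_mono[OF radial_drift_le less_imp_le[OF \<sigma>_pos]])
  finally show "T * \<bar>snd (velX N \<gamma> \<epsilon> P i)\<bar> \<le> \<delta> / \<sigma> / 2" by simp
qed (use T_pos \<delta>_pos \<sigma>_pos lipschitz_const_pos lipschitz_time velX_lipschitz in auto)

lemma exists_X_sol: "\<exists>X. is_X_sol N \<gamma> \<epsilon> X0 T X"
proof -
  obtain X where X0: "\<forall>i\<in>{1..N}. X i 0 = X0 i" and slab: "\<forall>t\<in>{0..T}. (\<lambda>k. X k t) \<in> radial_slab N X0 (\<delta> / \<sigma>)"
    and dX: "\<forall>t\<in>{0..T}. \<forall>i\<in>{1..N}. (X i has_vector_derivative velX N \<gamma> \<epsilon> (\<lambda>k. X k t) i) (at t within {0..T})"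
    using X.exists_solution by blast
  have "0 < snd (X i t)" if "t \<in> {0..T}" "i \<in> {1..N}" for t i
    using X_slab_radius(2)[OF slab[rule_format, OF that(1)] that(2)] r_pos by simp
  moreover have "X i t \<noteq> X j t" if "t \<in> {0..T}" "i \<in> {1..N}" "j \<in> {1..N}" "i \<noteq> j" for t i j
  proof -
    have "2 * (\<delta> / \<sigma>) \<le> norm (X i t - X j t)"
      using X_slab_separated[OF slab[rule_format, OF that(1)] that(2-4)] .
    then show ?thesis using \<delta>_over_\<sigma>_pos by auto
  qed
  ultimately show ?thesis using X0 dX unfolding is_X_sol_def by blast
qed

lemma X_sol_in_half_slab:
  assumes "is_X_sol N \<gamma> \<epsilon> X0 T X" and "t \<in> {0..T}"
  shows "(\<lambda>k. X k t) \<in> radial_slab N X0 (\<delta> / \<sigma> / 2)"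
  using assms by (intro X.solution_in_half_slab) (auto simp: is_X_sol_def)

lemma X_sol_in_slab:
  assumes "is_X_sol N \<gamma> \<epsilon> X0 T X" and "t \<in> {0..T}"
  shows "(\<lambda>k. X k t) \<in> radial_slab N X0 (\<delta> / \<sigma>)"
proof -
  have "x / 2 \<le> x" if "0 < x" for x :: real using that by simp
  then have "\<delta> / \<sigma> / 2 \<le> \<delta> / \<sigma>" using \<delta>_over_\<sigma>_pos by blast
  then show ?thesis using X_sol_in_half_slab[OF assms] radial_slab_mono by blast
qed

lemma X_sol_in_region:
  assumes X: "is_X_sol N \<gamma> \<epsilon> X0 T X" and t: "t \<in> {0..T}" and i: "i \<in> {1..N}"
  shows "X i t \<in> regionA (fst Xs) \<epsilon> (snd (X0 i)) \<delta> h0"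
proof -
  note slab = X_sol_in_slab[OF X]
  have "norm (X i t - X i 0) \<le> (\<gamma> / (2 * pi * r) + \<gamma> * N / (4 * pi * \<delta>) / \<sigma>) * (t - 0)"
    using X i slab norm_velX_le
    by (intro norm_diff_le_of_vector_derivative_bound_within[OF _ _ t]) (auto simp: is_X_sol_def)
  also have "\<dots> \<le> (\<gamma> / (2 * pi * r) + \<gamma> * N / (4 * pi * \<delta>) / \<sigma>) * T"
    using t \<gamma>_pos r_pos \<delta>_pos \<sigma>_pos by (intro mult_left_mono) auto
  finally have "\<bar>fst (X i t) - fst (X0 i)\<bar> \<le> T * \<gamma> / (2 * pi * r) + T * (\<gamma> * N / (4 * pi * \<delta>)) / \<sigma>"
    using abs_fst_le_norm[of "X i t - X i 0"] X i by (simp add: is_X_sol_def algebra_simps)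
  moreover have "\<bar>fst (X0 i) - fst Xs\<bar> \<le> Y0_bound / \<sigma>"
    using abs_fst_le_norm[of "Y0 i"] norm_Y0_le[OF i] \<sigma>_pos by (simp add: X0_eq divide_right_mono)
  ultimately have "\<bar>fst (X i t) - fst Xs\<bar> \<le> h0"
    using axial_time axial_margin_X by (simp add: add_divide_distrib)
  moreover have "\<bar>snd (X i t) - snd (X0 i)\<bar> \<le> \<delta> / \<sigma>"
    using slab[OF t] i unfolding radial_slab_def by blast
  ultimately show ?thesis unfolding regionA_def by simp
qed

lemma Xtilde_eq: "Xtilde \<gamma> Xs \<epsilon> Y i t = Xs + (\<gamma> / (4 * pi * r) * t) *\<^sub>R ez + (1 / \<sigma>) *\<^sub>R Y i t"
  unfolding Xtilde_def ..

lemma Xtilde_in_region: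
  assumes Y: "is_Y_sol N \<gamma> r Y0 T Y" and t: "t \<in> {0..T}" and i: "i \<in> {1..N}"
  shows "Xtilde \<gamma> Xs \<epsilon> Y i t \<in> regionA (fst Xs) \<epsilon> (snd (X0 i)) \<delta> h0"
proof -
  have "norm (Y i t - Y i 0) \<le> velY_bound * (t - 0)"
    using Y i Y_sol_in_slab[OF Y] norm_velY_le
    by (intro norm_diff_le_of_vector_derivative_bound_within[OF _ _ t]) (auto simp: is_Y_sol_def)
  also have "\<dots> \<le> T * velY_bound"
    using mult_right_mono[OF _ velY_bound_nonneg, of t T] t by (simp add: mult.commute)
  finally have "\<bar>fst (Y i t)\<bar> \<le> Y0_bound + T * velY_bound"
    using abs_fst_le_norm[of "Y i t - Y i 0"] abs_fst_le_norm[of "Y0 i"] norm_Y0_le[OF i] Y i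
    by (auto simp: is_Y_sol_def)
  then have "\<bar>fst (Y i t)\<bar> / \<sigma> \<le> (Y0_bound + T * velY_bound) / \<sigma>"
    by (rule divide_right_mono) (use \<sigma>_pos in simp)
  moreover have "\<bar>fst (Y i t) / \<sigma>\<bar> = \<bar>fst (Y i t)\<bar> / \<sigma>" using \<sigma>_pos by (simp add: abs_divide)
  ultimately have "\<bar>fst (Y i t) / \<sigma>\<bar> \<le> h0 / 2" using axial_margin_Y by linarith
  moreover have "\<gamma> / (4 * pi * r) * t \<le> h0 / 2"
  proof -
    have "\<gamma> / (4 * pi * r) * t \<le> \<gamma> / (4 * pi * r) * T"
      using t \<gamma>_pos r_pos by (intro mult_left_mono) auto
    also have "\<dots> \<le> T * \<gamma> / (2 * pi * r)"
      using T_pos \<gamma>_pos r_pos by (simp add: field_simps)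
    finally show ?thesis using axial_time by linarith
  qed
  moreover have "fst (Xtilde \<gamma> Xs \<epsilon> Y i t) - fst Xs = \<gamma> / (4 * pi * r) * t + fst (Y i t) / \<sigma>"
    by (simp add: Xtilde_eq ez_def)
  moreover have "\<bar>\<gamma> / (4 * pi * r) * t\<bar> = \<gamma> / (4 * pi * r) * t" using t \<gamma>_pos r_pos by simp
  ultimately have "\<bar>fst (Xtilde \<gamma> Xs \<epsilon> Y i t) - fst Xs\<bar> \<le> h0"
    using abs_triangle_ineq[of "\<gamma> / (4 * pi * r) * t" "fst (Y i t) / \<sigma>"] by linarith
  moreover have "\<bar>snd (Y i t) - snd (Y0 i)\<bar> \<le> \<delta>"
    using Y_sol_in_slab[OF Y t] i unfolding radial_slab_def by blast
  then have "\<bar>snd (Xtilde \<gamma> Xs \<epsilon> Y i t) - snd (X0 i)\<bar> \<le> \<delta> / \<sigma>"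
    using \<sigma>_pos by (simp add: Xtilde_eq X0_eq ez_def diff_divide_distrib[symmetric] divide_right_mono)
  ultimately show ?thesis unfolding regionA_def by simp
qed

lemma interaction_Xtilde:
  "interaction N (\<lambda>k. Xtilde \<gamma> Xs \<epsilon> Y k t) i = \<sigma> *\<^sub>R interaction N (\<lambda>k. Y k t) i"
  using interaction_scaleR[of "1 / \<sigma>" N "\<lambda>k. Xtilde \<gamma> Xs \<epsilon> Y k t" i "\<lambda>k. Y k t"] \<sigma>_pos
  by (simp add: Xtilde_eq scaleR_diff_right)

lemma velocity_defect_eq:
  "velX N \<gamma> \<epsilon> P i - ((\<gamma> / (4 * pi * r)) *\<^sub>R ez + (1 / \<sigma>) *\<^sub>R velY N \<gamma> r W i)
   = (\<gamma> / (4 * pi) * (1 / snd (P i) - 1 / r + (snd (W i) / \<sigma>) / r\<^sup>2)) *\<^sub>R ez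
     + (\<gamma> / (2 * pi * lnabs \<epsilon>)) *\<^sub>R (interaction N P i - \<sigma> *\<^sub>R interaction N W i)"
proof -
  have "(\<gamma> / (2 * pi * lnabs \<epsilon>)) *\<^sub>R (\<sigma> *\<^sub>R interaction N W i)
      = (\<gamma> / (2 * pi) * (\<sigma> / lnabs \<epsilon>)) *\<^sub>R interaction N W i"
    by simp
  also have "\<dots> = (1 / \<sigma>) *\<^sub>R ((\<gamma> / (2 * pi)) *\<^sub>R interaction N W i)"
    unfolding \<sigma>_div_lnabs by simp
  finally have "(\<gamma> / (2 * pi * lnabs \<epsilon>)) *\<^sub>R (\<sigma> *\<^sub>R interaction N W i)
      = (1 / \<sigma>) *\<^sub>R ((\<gamma> / (2 * pi)) *\<^sub>R interaction N W i)" .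
  then show ?thesis
    unfolding velX_interaction velY_interaction scaleR_diff_right
    by (simp add: algebra_simps ez_def prod_eq_iff field_simps)
qed

text \<open>The self-induced speed \<open>1 / snd (P i)\<close> is expanded to second order around \<open>r\<close>: the linear term is
  the drift of the limit system and the quadratic one is \<open>O(1 / lnabs \<epsilon>)\<close>.\<close>

lemma norm_velocity_defect_le:
  assumes P: "P \<in> radial_slab N X0 (\<delta> / \<sigma>)" and W: "(\<lambda>k. Y k t) \<in> radial_slab N Y0 \<delta>"
    and i: "i \<in> {1..N}"
  shows "norm (velX N \<gamma> \<epsilon> P i - ((\<gamma> / (4 * pi * r)) *\<^sub>R ez + (1 / \<sigma>) *\<^sub>R velY N \<gamma> r (\<lambda>k. Y k t) i))
    \<le> lipschitz_const * (\<Sum>j\<in>{1..N}. norm (P j - Xtilde \<gamma> Xs \<epsilon> Y j t)) + consistency_const / lnabs \<epsilon>"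
proof -
  define Z where "Z k = Xtilde \<gamma> Xs \<epsilon> Y k t" for k
  define S where "S = (\<Sum>j\<in>{1..N}. norm (P j - Z j))"
  have "lnabs \<epsilon> > 0" using \<sigma>_pos by simp
  have "\<bar>snd (P i) - r - snd (Y i t) / \<sigma>\<bar> \<le> S"
  proof -
    have "snd (P i) - r - snd (Y i t) / \<sigma> = snd (P i - Z i)" by (simp add: Z_def Xtilde_eq ez_def)
    then show ?thesis
      using abs_snd_le_norm[of "P i - Z i"] member_le_sum[OF i, of "\<lambda>j. norm (P j - Z j)"]
      unfolding S_def by simp
  qed
  have "((Y0_bound + \<delta>) / \<sigma>)\<^sup>2 = (Y0_bound + \<delta>)\<^sup>2 / lnabs \<epsilon>"
    by (simp only: power_divide power2_eq_square[of \<sigma>] \<sigma>_squared)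
  have "\<bar>1 / snd (P i) - 1 / r + (snd (Y i t) / \<sigma>) / r\<^sup>2\<bar>
      \<le> 2 * ((Y0_bound + \<delta>) / \<sigma>)\<^sup>2 / r ^ 3 + \<bar>snd (P i) - r - snd (Y i t) / \<sigma>\<bar> / r\<^sup>2"
    by (rule abs_inverse_expansion_le[OF r_pos X_slab_radius(2)[OF P i] X_slab_radius(1)[OF P i]])
  also have "\<dots> \<le> 2 * ((Y0_bound + \<delta>)\<^sup>2 / lnabs \<epsilon>) / r ^ 3 + S / r\<^sup>2"
    unfolding \<open>((Y0_bound + \<delta>) / \<sigma>)\<^sup>2 = _\<close>
    by (intro add_mono order_refl divide_right_mono \<open>\<bar>snd (P i) - r - snd (Y i t) / \<sigma>\<bar> \<le> S\<close>) simp
  finally have radial: "\<bar>1 / snd (P i) - 1 / r + (snd (Y i t) / \<sigma>) / r\<^sup>2\<bar>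
      \<le> 2 * ((Y0_bound + \<delta>)\<^sup>2 / lnabs \<epsilon>) / r ^ 3 + S / r\<^sup>2" .
  have Z_separated: "2 * (\<delta> / \<sigma>) \<le> norm (Z i - Z j)" if "j \<in> {1..N}" "j \<noteq> i" for j
  proof -
    have "norm (Z i - Z j) = norm (Y i t - Y j t) / \<sigma>"
      using \<sigma>_pos by (simp add: Z_def Xtilde_eq flip: scaleR_diff_right)
    moreover have "2 * \<delta> \<le> norm (Y i t - Y j t)" using Y_slab_separated[OF W i that(1)] that(2) by auto
    ultimately show ?thesis using \<sigma>_pos by (simp add: divide_right_mono)
  qed
  have interaction: "norm (interaction N P i - interaction N Z i) \<le> (real N + 1) / (2 * (\<delta> / \<sigma>))\<^sup>2 * S"
    unfolding S_def
    by (rule interaction_lipschitz) (use \<delta>_over_\<sigma>_pos i X_slab_separated[OF P i] Z_separated in auto)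
  have "norm (velX N \<gamma> \<epsilon> P i - ((\<gamma> / (4 * pi * r)) *\<^sub>R ez + (1 / \<sigma>) *\<^sub>R velY N \<gamma> r (\<lambda>k. Y k t) i))
      \<le> norm ((\<gamma> / (4 * pi) * (1 / snd (P i) - 1 / r + (snd (Y i t) / \<sigma>) / r\<^sup>2)) *\<^sub>R ez)
        + norm ((\<gamma> / (2 * pi * lnabs \<epsilon>)) *\<^sub>R (interaction N P i - interaction N Z i))"
    unfolding velocity_defect_eq Z_def interaction_Xtilde by (rule norm_triangle_ineq)
  also have "\<dots> = \<gamma> / (4 * pi) * \<bar>1 / snd (P i) - 1 / r + (snd (Y i t) / \<sigma>) / r\<^sup>2\<bar>
      + \<gamma> / (2 * pi * lnabs \<epsilon>) * norm (interaction N P i - interaction N Z i)"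
    using \<gamma>_pos \<open>lnabs \<epsilon> > 0\<close> by (simp add: abs_mult)
  also have "\<dots> \<le> \<gamma> / (4 * pi) * (2 * ((Y0_bound + \<delta>)\<^sup>2 / lnabs \<epsilon>) / r ^ 3 + S / r\<^sup>2)
      + (\<gamma> / (2 * pi * lnabs \<epsilon>) * ((real N + 1) / (2 * (\<delta> / \<sigma>))\<^sup>2)) * S"
    using radial interaction \<gamma>_pos \<open>lnabs \<epsilon> > 0\<close>
    by (simp only: mult.assoc) (intro add_mono mult_left_mono, auto)
  also have "\<dots> \<le> lipschitz_const * S + consistency_const / lnabs \<epsilon>"
  proof -
    have "0 \<le> S" unfolding S_def by (simp add: sum_nonneg)
    then have "\<gamma> / (4 * pi) * (S / r\<^sup>2) \<le> \<gamma> / (pi * r\<^sup>2) * S"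
      using \<gamma>_pos r_pos by (simp add: field_simps)
    moreover have "\<gamma> / (4 * pi) * (2 * ((Y0_bound + \<delta>)\<^sup>2 / lnabs \<epsilon>) / r ^ 3 + S / r\<^sup>2)
        = consistency_const / lnabs \<epsilon> + \<gamma> / (4 * pi) * (S / r\<^sup>2)"
      unfolding consistency_const_def using \<open>lnabs \<epsilon> > 0\<close> r_pos by (simp add: field_simps)
    moreover have "lipschitz_const * S = \<gamma> * (real N + 1) / (8 * pi * \<delta>\<^sup>2) * S + \<gamma> / (pi * r\<^sup>2) * S"
      unfolding lipschitz_const_def by (simp add: algebra_simps)
    ultimately show ?thesis unfolding lipschitz_coefficient by linarith
  qed
  finally show ?thesis unfolding S_def Z_def .
qed

lemma X_close_Xtilde:
  assumes X: "is_X_sol N \<gamma> \<epsilon> X0 T X" and Y: "is_Y_sol N \<gamma> r Y0 T Y"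
    and t: "t \<in> {0..T}" and i: "i \<in> {1..N}"
  shows "norm (X i t - Xtilde \<gamma> Xs \<epsilon> Y i t) \<le> error_const / lnabs \<epsilon>"
proof -
  define D where "D j s = X j s - Xtilde \<gamma> Xs \<epsilon> Y j s" for j s
  define V where "V j s = velX N \<gamma> \<epsilon> (\<lambda>k. X k s) j
    - ((\<gamma> / (4 * pi * r)) *\<^sub>R ez + (1 / \<sigma>) *\<^sub>R velY N \<gamma> r (\<lambda>k. Y k s) j)" for j s
  have "lnabs \<epsilon> > 0" using \<sigma>_pos by simp
  have "norm (D i t) \<le> 2 * card {1..N} * T * (consistency_const / lnabs \<epsilon>)"
  proof (rule norm_le_of_derivative_linear_in_sum[where D = D and V = V and a = lipschitz_const, OF _ _ _ _ _ _ _ i t])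
    show "0 \<le> consistency_const / lnabs \<epsilon>"
      using consistency_const_nonneg \<open>lnabs \<epsilon> > 0\<close> by simp
    show "T * lipschitz_const * card {1..N} \<le> 1/2" using lipschitz_time by simp
    fix j assume j: "j \<in> {1..N}"
    show "D j 0 = 0" using X Y j by (simp add: D_def is_X_sol_def is_Y_sol_def Xtilde_eq X0_eq)
    fix s assume s: "s \<in> {0..T}"
    have "(Y j has_vector_derivative velY N \<gamma> r (\<lambda>k. Y k s) j) (at s within {0..T})"
      using Y j s unfolding is_Y_sol_def by blast
    then have "((\<lambda>s. (1 / \<sigma>) *\<^sub>R Y j s) has_vector_derivative (1 / \<sigma>) *\<^sub>R velY N \<gamma> r (\<lambda>k. Y k s) j)
        (at s within {0..T})"
      by (rule bounded_linear.has_vector_derivative[OF bounded_linear_scaleR_right])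
    moreover have "((\<lambda>s. Xs + (\<gamma> / (4 * pi * r) * s) *\<^sub>R ez) has_vector_derivative (\<gamma> / (4 * pi * r)) *\<^sub>R ez)
        (at s within {0..T})"
      using r_pos by (auto intro!: derivative_eq_intros)
    ultimately have "((\<lambda>s. Xs + (\<gamma> / (4 * pi * r) * s) *\<^sub>R ez + (1 / \<sigma>) *\<^sub>R Y j s) has_vector_derivative
        (\<gamma> / (4 * pi * r)) *\<^sub>R ez + (1 / \<sigma>) *\<^sub>R velY N \<gamma> r (\<lambda>k. Y k s) j) (at s within {0..T})"
      by (intro has_vector_derivative_add)
    then show "(D j has_vector_derivative V j s) (at s within {0..T})"
      using X j s unfolding D_def V_def Xtilde_eq is_X_sol_def by (auto intro: has_vector_derivative_diff)
    show "norm (V j s) \<le> lipschitz_const * (\<Sum>k\<in>{1..N}. norm (D k s)) + consistency_const / lnabs \<epsilon>"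
      unfolding D_def V_def
      by (rule norm_velocity_defect_le[where Y = Y and t = s, OF X_sol_in_slab[OF X s] Y_sol_in_slab[OF Y s] j])
  qed (use lipschitz_const_pos in auto)
  also have "\<dots> \<le> error_const / lnabs \<epsilon>"
    unfolding error_const_def using \<open>lnabs \<epsilon> > 0\<close> by (simp add: divide_right_mono)
  finally show ?thesis unfolding D_def .
qed

lemma solutions_estimates:
  "(\<exists>X. is_X_sol N \<gamma> \<epsilon> X0 T X) \<and>
   (\<forall>X Y. is_X_sol N \<gamma> \<epsilon> X0 T X \<longrightarrow> is_Y_sol N \<gamma> r Y0 T Y \<longrightarrow>
      (\<forall>t\<in>{0..T}. \<forall>i\<in>{1..N}.
         X i t \<in> regionA (fst Xs) \<epsilon> (snd (X0 i)) \<delta> h0 \<and>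
         Xtilde \<gamma> Xs \<epsilon> Y i t \<in> regionA (fst Xs) \<epsilon> (snd (X0 i)) \<delta> h0 \<and>
         norm (X i t - Xtilde \<gamma> Xs \<epsilon> Y i t) \<le> error_const / lnabs \<epsilon>))"
  using exists_X_sol X_sol_in_region Xtilde_in_region X_close_Xtilde by blast

end

theorem lemma5p3:
  fixes N :: nat and Xs :: "real \<times> real" and Y0 :: "nat \<Rightarrow> real \<times> real"
    and \<gamma> h0 :: real
  assumes "N \<ge> 2" and "snd Xs > 0"
    and "inj_on (\<lambda>i. snd (Y0 i)) {1..N}"
    and "\<gamma> > 0" and "h0 > 0"
  shows "\<exists>TX>0. \<exists>\<epsilon>0>0. \<exists>C>0. \<epsilon>0 < 1 \<and>
    (\<exists>Y. is_Y_sol N \<gamma> (snd Xs) Y0 TX Y) \<and>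
    (\<forall>\<epsilon>\<in>{0<..\<epsilon>0}.
       (\<exists>X. is_X_sol N \<gamma> \<epsilon> (X0eps Xs Y0 \<epsilon>) TX X) \<and>
       (\<forall>X Y. is_X_sol N \<gamma> \<epsilon> (X0eps Xs Y0 \<epsilon>) TX X \<longrightarrow> is_Y_sol N \<gamma> (snd Xs) Y0 TX Y \<longrightarrow>
          (\<forall>t\<in>{0..TX}. \<forall>i\<in>{1..N}.
             X i t \<in> regionA (fst Xs) \<epsilon> (snd (X0eps Xs Y0 \<epsilon> i)) (d0 N Y0) h0 \<and>
             Xtilde \<gamma> Xs \<epsilon> Y i t \<in> regionA (fst Xs) \<epsilon> (snd (X0eps Xs Y0 \<epsilon> i)) (d0 N Y0) h0 \<and>
             norm (X i t - Xtilde \<gamma> Xs \<epsilon> Y i t) \<le> C / lnabs \<epsilon>)))"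
proof -
  interpret vortex_rings N Xs Y0 \<gamma> h0
    using assms by unfold_locales
  obtain T where "0 < T" "T * \<gamma> * N \<le> 2 * pi * \<delta>\<^sup>2" "T * lipschitz_const * N \<le> 1/2"
    "T * \<gamma> / (2 * pi * r) \<le> h0 / 2"
    using exists_short_time by blast
  then interpret vortex_rings_short_time N Xs Y0 \<gamma> h0 T
    by unfold_locales
  define \<epsilon>0 where "\<epsilon>0 = exp (- sigma_min\<^sup>2)"
  have "0 < \<epsilon>0" and "\<epsilon>0 < 1" using sigma_min_bounds(1) by (auto simp: \<epsilon>0_def)
  have eps: "vortex_rings_eps N Xs Y0 \<gamma> h0 T \<epsilon>" if "\<epsilon> \<in> {0<..\<epsilon>0}" for \<epsilon>
    using that sigma_min_le_sqrt_lnabs[of \<epsilon>]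
    by (intro vortex_rings_eps.intro vortex_rings_short_time_axioms vortex_rings_eps_axioms.intro)
      (auto simp: \<epsilon>0_def)
  show ?thesis
    using T_pos \<open>0 < \<epsilon>0\<close> \<open>\<epsilon>0 < 1\<close> error_const_pos exists_Y_sol vortex_rings_eps.solutions_estimates[OF eps]
    by (intro exI[of _ T] exI[of _ \<epsilon>0] exI[of _ error_const]) blast
qed

end
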